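(* Under the hypotheses and notation below, the function $h:=(u-1)^2+v^2$ satisfies $$\tfrac12\Delta h=|\nabla u|^2+|\nabla v|^2\ \ge\ h^2+4u\,h,$$ and in particular, where $u>0$, $\Delta h\ge 2h^2$.
   Context: $f:M^{3}\to\mathbb{S}^{4}$ is a minimal isometric immersion of a 3-dimensional Riemannian manifold with Gauss–Kronecker curvature (product of principal curvatures) identically zero and nowhere vanishing second fundamental form; its principal curvatures are $\lambda>0>-\lambda$. $(e_1,e_2,e_3)$ is an orthonormal frame of principal directions for $\lambda,0,-\lambda$, $\nabla$ the Levi-Civita connection, $u:=\langle\nabla_{e_3}e_1,e_2\rangle$, $v:=e_2(\log\lambda)$, and $\Delta$ is the Laplace–Beltrami operator of $M^3$. *)

theory Defs
  imports "HOL-Analysis.Analysis"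
begin

text \<open>M^3 is represented by an open set U of real^3 (a coordinate
  chart), the immersion by f : U -> real^5 with |f| = 1 (so f maps into the unit sphere S^4),
  and M carries the induced metric (so f is isometric by construction).\<close>

definition pd :: "('a::real_normed_vector \<Rightarrow> 'b::real_normed_vector) \<Rightarrow> 'a \<Rightarrow> 'a \<Rightarrow> 'b" where
  "pd \<phi> p w = frechet_derivative \<phi> (at p) w"

fun Ck :: "nat \<Rightarrow> 'a::real_normed_vector set \<Rightarrow> ('a \<Rightarrow> 'b::real_normed_vector) \<Rightarrow> bool" where
  "Ck 0 U \<phi> = continuous_on U \<phi>"
| "Ck (Suc k) U \<phi> = (\<phi> differentiable_on U \<and> (\<forall>w. Ck k U (\<lambda>p. pd \<phi> p w)))"

definition smooth_on :: "'a::real_normed_vector set \<Rightarrow> ('a \<Rightarrow> 'b::real_normed_vector) \<Rightarrow> bool" where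
  "smooth_on U \<phi> \<longleftrightarrow> (\<forall>k. Ck k U \<phi>)"

definition gm :: "(real^3 \<Rightarrow> real^5) \<Rightarrow> real^3 \<Rightarrow> real^3 \<Rightarrow> real^3 \<Rightarrow> real" where
  "gm f p X Y = inner (pd f p X) (pd f p Y)"

definition Gmat :: "(real^3 \<Rightarrow> real^5) \<Rightarrow> real^3 \<Rightarrow> real^3^3" where
  "Gmat f p = (\<chi> i j. gm f p (axis i 1) (axis j 1))"

definition Gam1 :: "(real^3 \<Rightarrow> real^5) \<Rightarrow> real^3 \<Rightarrow> real^3 \<Rightarrow> real^3 \<Rightarrow> real^3 \<Rightarrow> real" where
  "Gam1 f p X Y Z = (pd (\<lambda>q. gm f q Y Z) p X + pd (\<lambda>q. gm f q X Z) p Y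
                     - pd (\<lambda>q. gm f q X Y) p Z) / 2"

text \<open>g(nabla_X Y, Z) at p, for vector fields X Y Z, with nabla the Levi-Civita connection
  of the induced metric: nabla_X Y = (X^i d_i Y^k + Gamma^k_ij X^i Y^j) d_k.\<close>
definition LC_inner :: "(real^3 \<Rightarrow> real^5) \<Rightarrow> (real^3 \<Rightarrow> real^3) \<Rightarrow> (real^3 \<Rightarrow> real^3)
      \<Rightarrow> (real^3 \<Rightarrow> real^3) \<Rightarrow> real^3 \<Rightarrow> real" where
  "LC_inner f X Y Z p = gm f p (pd Y p (X p)) (Z p) + Gam1 f p (X p) (Y p) (Z p)"

definition grad_sq :: "(real^3 \<Rightarrow> real^5) \<Rightarrow> (real^3 \<Rightarrow> real) \<Rightarrow> real^3 \<Rightarrow> real" where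
  "grad_sq f \<phi> p = (\<Sum>i\<in>UNIV. \<Sum>j\<in>UNIV. matrix_inv (Gmat f p) $ i $ j
                        * pd \<phi> p (axis i 1) * pd \<phi> p (axis j 1))"

definition laplacian :: "(real^3 \<Rightarrow> real^5) \<Rightarrow> (real^3 \<Rightarrow> real) \<Rightarrow> real^3 \<Rightarrow> real" where
  "laplacian f \<phi> p = (1 / sqrt (det (Gmat f p))) *
     (\<Sum>i\<in>UNIV. pd (\<lambda>q. sqrt (det (Gmat f q)) *
         (\<Sum>j\<in>UNIV. matrix_inv (Gmat f q) $ i $ j * pd \<phi> q (axis j 1))) p (axis i 1))"

end

theory Submission
  imports Defs
begin

(* Along the principal frame E1, E2, E3 the Codazzi equations express the connection coefficients
   through u and v = E2(log lam), and the Gauss equations then give the first order system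
     E2 v = 1 + v^2 - u^2,   E2 u = 2 u v,   E1 v = - E3 u,   E3 v = E1 u.
   The last two are Cauchy-Riemann equations; together with the first two and the commutator
   [E1, E3] they make u and v harmonic, so that
     Delta h / 2 = |grad u|^2 + |grad v|^2 >= (E2 u)^2 + (E2 v)^2 = h^2 + 4 u h.
   The coordinate Laplace-Beltrami operator is matched with its frame expression through the
   inverse metric sum_k E_k E_k^T and the volume density 1 / |det (E1, E2, E3)|. *)

section \<open>Smooth functions on open sets\<close>

lemma pd_eqI: "(\<phi> has_derivative D) (at p) \<Longrightarrow> pd \<phi> p = D"
  unfolding pd_def by (rule frechet_derivative_at[symmetric])

lemma pd_cong_on_open:
  assumes "open U" "p \<in> U" "\<forall>x\<in>U. \<phi> x = \<psi> x"
  shows "pd \<phi> p = pd \<psi> p"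
proof -
  have "(\<phi> has_derivative D) (at p) \<longleftrightarrow> (\<psi> has_derivative D) (at p)" for D
    using has_derivative_transform_within_open[OF _ assms(1,2)] assms(3) by metis
  then show ?thesis unfolding pd_def frechet_derivative_def by simp
qed

lemma has_derivative_pd:
  "open U \<Longrightarrow> \<phi> differentiable_on U \<Longrightarrow> p \<in> U \<Longrightarrow> (\<phi> has_derivative pd \<phi> p) (at p)"
  unfolding pd_def using differentiable_on_eq_differentiable_at frechet_derivative_works by blast

lemma differentiable_on_cong:
  assumes "\<forall>x\<in>U. \<phi> x = \<psi> x" "\<phi> differentiable_on U"
  shows "\<psi> differentiable_on U"
  using assms differentiable_transform_within[OF _ zero_less_one, of \<phi> _ U \<psi>]
  unfolding differentiable_on_def by blast

lemma Ck_SucD: "Ck (Suc k) U \<phi> \<Longrightarrow> Ck k U \<phi>"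
  by (induction k arbitrary: \<phi>) (simp_all add: differentiable_imp_continuous_on)

lemma Ck_cong: "open U \<Longrightarrow> \<forall>x\<in>U. \<phi> x = \<psi> x \<Longrightarrow> Ck k U \<phi> \<Longrightarrow> Ck k U \<psi>"
proof (induction k arbitrary: \<phi> \<psi>)
  case 0
  then show ?case using continuous_on_cong by auto
next
  case (Suc k)
  have pd_eq: "\<forall>x\<in>U. pd \<phi> x w = pd \<psi> x w" for w
    using pd_cong_on_open[OF Suc.prems(1) _ Suc.prems(2)] by simp
  have "Ck k U (\<lambda>p. pd \<psi> p w)" for w
    using Suc.IH[OF Suc.prems(1) pd_eq] Suc.prems(3) by simp
  then show ?case using Suc.prems(3) differentiable_on_cong[OF Suc.prems(2)] by simp
qed

lemma Ck_const:
  fixes U :: "'a::real_normed_vector set"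
  shows "Ck k U (\<lambda>x. c)"
proof (induction k arbitrary: c)
  case (Suc k)
  have "pd (\<lambda>x::'a. c) p = (\<lambda>w. 0)" for p by (rule pd_eqI[OF has_derivative_const])
  then show ?case using Suc by simp
qed simp

lemma Ck_add: "open U \<Longrightarrow> Ck k U \<phi> \<Longrightarrow> Ck k U \<psi> \<Longrightarrow> Ck k U (\<lambda>x. \<phi> x + \<psi> x)"
proof (induction k arbitrary: \<phi> \<psi>)
  case 0
  then show ?case by (simp add: continuous_on_add)
next
  case (Suc k)
  have d: "\<phi> differentiable_on U" "\<psi> differentiable_on U" using Suc by auto
  have pd_eq: "\<forall>x\<in>U. pd \<phi> x w + pd \<psi> x w = pd (\<lambda>x. \<phi> x + \<psi> x) x w" for w
    using pd_eqI[OF has_derivative_add[OF has_derivative_pd[OF Suc.prems(1) d(1)]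
          has_derivative_pd[OF Suc.prems(1) d(2)]]] by simp
  have "Ck k U (\<lambda>x. pd \<phi> x w + pd \<psi> x w)" for w using Suc by simp
  then have "Ck k U (\<lambda>x. pd (\<lambda>x. \<phi> x + \<psi> x) x w)" for w
    by (rule Ck_cong[OF Suc.prems(1) pd_eq])
  then show ?case using d by (simp add: differentiable_on_add)
qed

lemma Ck_bounded_linear: "open U \<Longrightarrow> bounded_linear L \<Longrightarrow> Ck k U \<phi> \<Longrightarrow> Ck k U (\<lambda>x. L (\<phi> x))"
proof (induction k arbitrary: \<phi>)
  case 0
  then show ?case using bounded_linear.continuous_on[of L] by simp
next
  case (Suc k)
  have d: "\<phi> differentiable_on U" using Suc by auto
  have hd: "((\<lambda>x. L (\<phi> x)) has_derivative (\<lambda>w. L (pd \<phi> x w))) (at x)" if "x \<in> U" for x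
    using bounded_linear.has_derivative[OF Suc.prems(2) has_derivative_pd[OF Suc.prems(1) d that]] .
  then have diff: "(\<lambda>x. L (\<phi> x)) differentiable_on U"
    using Suc.prems(1) differentiable_on_eq_differentiable_at differentiableI by blast
  have pd_eq: "\<forall>x\<in>U. L (pd \<phi> x w) = pd (\<lambda>x. L (\<phi> x)) x w" for w
    using pd_eqI[OF hd] by simp
  have "Ck k U (\<lambda>x. L (pd \<phi> x w))" for w using Suc by simp
  then have "Ck k U (\<lambda>x. pd (\<lambda>x. L (\<phi> x)) x w)" for w
    by (rule Ck_cong[OF Suc.prems(1) pd_eq])
  with diff show ?case by simp
qed

lemma Ck_bilinear:
  assumes "bounded_bilinear bop" "open U"
  shows "Ck k U \<phi> \<Longrightarrow> Ck k U \<psi> \<Longrightarrow> Ck k U (\<lambda>x. bop (\<phi> x) (\<psi> x))"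
proof (induction k arbitrary: \<phi> \<psi>)
  case 0
  then show ?case using bounded_bilinear.continuous_on[OF assms(1)] by simp
next
  case (Suc k)
  have d: "\<phi> differentiable_on U" "\<psi> differentiable_on U" using Suc by auto
  have hd: "((\<lambda>x. bop (\<phi> x) (\<psi> x)) has_derivative
      (\<lambda>w. bop (\<phi> x) (pd \<psi> x w) + bop (pd \<phi> x w) (\<psi> x))) (at x)" if "x \<in> U" for x
    using bounded_bilinear.FDERIV[OF assms(1) has_derivative_pd[OF assms(2) d(1) that]
        has_derivative_pd[OF assms(2) d(2) that]] .
  then have diff: "(\<lambda>x. bop (\<phi> x) (\<psi> x)) differentiable_on U"
    using assms(2) differentiable_on_eq_differentiable_at differentiableI by blast
  have pd_eq: "\<forall>x\<in>U. bop (\<phi> x) (pd \<psi> x w) + bop (pd \<phi> x w) (\<psi> x)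
      = pd (\<lambda>x. bop (\<phi> x) (\<psi> x)) x w" for w
    using pd_eqI[OF hd] by simp
  have "Ck k U (\<lambda>x. bop (\<phi> x) (pd \<psi> x w) + bop (pd \<phi> x w) (\<psi> x))" for w
  proof -
    have "Ck k U \<phi>" "Ck k U \<psi>" using Suc.prems Ck_SucD by blast+
    then show ?thesis using Suc.IH Suc.prems by (intro Ck_add[OF assms(2)]) auto
  qed
  then have "Ck k U (\<lambda>x. pd (\<lambda>x. bop (\<phi> x) (\<psi> x)) x w)" for w
    by (rule Ck_cong[OF assms(2) pd_eq])
  with diff show ?case by simp
qed

lemma Ck_inverse:
  fixes \<phi> :: "'a::real_normed_vector \<Rightarrow> real"
  assumes "open U"
  shows "Ck k U \<phi> \<Longrightarrow> \<forall>x\<in>U. \<phi> x \<noteq> 0 \<Longrightarrow> Ck k U (\<lambda>x. inverse (\<phi> x))"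
proof (induction k arbitrary: \<phi>)
  case 0
  then show ?case by (simp add: continuous_on_inverse)
next
  case (Suc k)
  have d: "\<phi> differentiable_on U" using Suc by auto
  have hd: "((\<lambda>x. inverse (\<phi> x)) has_derivative
      (\<lambda>w. - (inverse (\<phi> x) * pd \<phi> x w * inverse (\<phi> x)))) (at x)" if "x \<in> U" for x
    using Suc.prems that by (intro Deriv.has_derivative_inverse has_derivative_pd[OF assms d]) auto
  then have diff: "(\<lambda>x. inverse (\<phi> x)) differentiable_on U"
    using assms differentiable_on_eq_differentiable_at differentiableI by blast
  have pd_eq: "\<forall>x\<in>U. - (pd \<phi> x w * (inverse (\<phi> x) * inverse (\<phi> x)))
      = pd (\<lambda>x. inverse (\<phi> x)) x w" for w
    using pd_eqI[OF hd] by (simp add: algebra_simps)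
  have "Ck k U (\<lambda>x. - (pd \<phi> x w * (inverse (\<phi> x) * inverse (\<phi> x))))" for w
  proof -
    have "Ck k U (\<lambda>x. inverse (\<phi> x))" using Suc Ck_SucD by blast
    then have "Ck k U (\<lambda>x. pd \<phi> x w * (inverse (\<phi> x) * inverse (\<phi> x)))"
      using Suc.prems by (intro Ck_bilinear[OF bounded_bilinear_mult assms]) auto
    then show ?thesis
      using Ck_bounded_linear[OF assms, of uminus] bounded_linear_minus[OF bounded_linear_ident] by auto
  qed
  then have "Ck k U (\<lambda>x. pd (\<lambda>x. inverse (\<phi> x)) x w)" for w
    by (rule Ck_cong[OF assms pd_eq])
  with diff show ?case by simp
qed

lemma Ck_sum:
  assumes "open U"
  shows "finite S \<Longrightarrow> (\<forall>i\<in>S. Ck k U (\<phi> i)) \<Longrightarrow> Ck k U (\<lambda>x. \<Sum>i\<in>S. \<phi> i x)"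
  by (induction S rule: finite_induct) (auto simp: Ck_const Ck_add[OF assms])

lemma smooth_on_iff_pd:
  "smooth_on U \<phi> \<longleftrightarrow> \<phi> differentiable_on U \<and> (\<forall>w. smooth_on U (\<lambda>p. pd \<phi> p w))"
  unfolding smooth_on_def
proof
  assume "\<forall>k. Ck k U \<phi>"
  then have "Ck (Suc k) U \<phi>" for k by blast
  then show "\<phi> differentiable_on U \<and> (\<forall>w k. Ck k U (\<lambda>p. pd \<phi> p w))" by auto
next
  assume "\<phi> differentiable_on U \<and> (\<forall>w k. Ck k U (\<lambda>p. pd \<phi> p w))"
  then show "\<forall>k. Ck k U \<phi>"
    by (metis Ck.elims(3) differentiable_imp_continuous_on)
qed

lemma smooth_on_pd: "smooth_on U \<phi> \<Longrightarrow> smooth_on U (\<lambda>x. pd \<phi> x w)"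
  using smooth_on_iff_pd by blast

lemma has_derivative_pd_smooth:
  "open U \<Longrightarrow> smooth_on U \<phi> \<Longrightarrow> p \<in> U \<Longrightarrow> (\<phi> has_derivative pd \<phi> p) (at p)"
  using has_derivative_pd smooth_on_iff_pd by blast

lemma bounded_linear_pd: "open U \<Longrightarrow> smooth_on U \<phi> \<Longrightarrow> p \<in> U \<Longrightarrow> bounded_linear (pd \<phi> p)"
  using has_derivative_pd_smooth has_derivative_bounded_linear by blast

lemma linear_pd: "open U \<Longrightarrow> smooth_on U \<phi> \<Longrightarrow> p \<in> U \<Longrightarrow> linear (pd \<phi> p)"
  using bounded_linear_pd bounded_linear.linear by blast

lemma smooth_on_cong: "open U \<Longrightarrow> \<forall>x\<in>U. \<phi> x = \<psi> x \<Longrightarrow> smooth_on U \<phi> \<Longrightarrow> smooth_on U \<psi>"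
  unfolding smooth_on_def using Ck_cong by blast

lemma smooth_on_const: "smooth_on U (\<lambda>x. c)"
  by (simp add: smooth_on_def Ck_const)

lemma smooth_on_add:
  "open U \<Longrightarrow> smooth_on U \<phi> \<Longrightarrow> smooth_on U \<psi> \<Longrightarrow> smooth_on U (\<lambda>x. \<phi> x + \<psi> x)"
  by (simp add: smooth_on_def Ck_add)

lemma smooth_on_bounded_linear:
  "open U \<Longrightarrow> bounded_linear L \<Longrightarrow> smooth_on U \<phi> \<Longrightarrow> smooth_on U (\<lambda>x. L (\<phi> x))"
  by (simp add: smooth_on_def Ck_bounded_linear)

lemma smooth_on_bilinear:
  "bounded_bilinear bop \<Longrightarrow> open U \<Longrightarrow> smooth_on U \<phi> \<Longrightarrow> smooth_on U \<psi>
    \<Longrightarrow> smooth_on U (\<lambda>x. bop (\<phi> x) (\<psi> x))"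
  by (simp add: smooth_on_def Ck_bilinear)

lemma smooth_on_inverse:
  "open U \<Longrightarrow> smooth_on U (\<phi> :: _ \<Rightarrow> real) \<Longrightarrow> \<forall>x\<in>U. \<phi> x \<noteq> 0
    \<Longrightarrow> smooth_on U (\<lambda>x. inverse (\<phi> x))"
  by (simp add: smooth_on_def Ck_inverse)

lemma smooth_on_sum:
  "open U \<Longrightarrow> finite S \<Longrightarrow> (\<forall>i\<in>S. smooth_on U (\<phi> i)) \<Longrightarrow> smooth_on U (\<lambda>x. \<Sum>i\<in>S. \<phi> i x)"
  by (simp add: smooth_on_def Ck_sum)

lemma smooth_on_mult:
  "open U \<Longrightarrow> smooth_on U (\<phi> :: _ \<Rightarrow> real) \<Longrightarrow> smooth_on U \<psi> \<Longrightarrow> smooth_on U (\<lambda>x. \<phi> x * \<psi> x)"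
  by (rule smooth_on_bilinear[OF bounded_bilinear_mult])

lemma smooth_on_scaleR:
  "open U \<Longrightarrow> smooth_on U \<phi> \<Longrightarrow> smooth_on U \<psi> \<Longrightarrow> smooth_on U (\<lambda>x. \<phi> x *\<^sub>R \<psi> x)"
  by (rule smooth_on_bilinear[OF bounded_bilinear_scaleR])

lemma smooth_on_inner:
  "open U \<Longrightarrow> smooth_on U \<phi> \<Longrightarrow> smooth_on U \<psi> \<Longrightarrow> smooth_on U (\<lambda>x. inner (\<phi> x) (\<psi> x))"
  by (rule smooth_on_bilinear[OF bounded_bilinear_inner])

lemma smooth_on_minus: "open U \<Longrightarrow> smooth_on U \<phi> \<Longrightarrow> smooth_on U (\<lambda>x. - \<phi> x)"
  using smooth_on_bounded_linear[of U uminus] bounded_linear_minus[OF bounded_linear_ident] by auto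

lemma smooth_on_diff:
  "open U \<Longrightarrow> smooth_on U \<phi> \<Longrightarrow> smooth_on U \<psi> \<Longrightarrow> smooth_on U (\<lambda>x. \<phi> x - \<psi> x)"
  using smooth_on_add[of U \<phi> "\<lambda>x. - \<psi> x"] smooth_on_minus by auto

lemma smooth_on_component: "open U \<Longrightarrow> smooth_on U \<phi> \<Longrightarrow> smooth_on U (\<lambda>x. \<phi> x $ i)"
  using smooth_on_bounded_linear[OF _ bounded_linear_vec_nth] by blast

lemma pd_bounded_linear:
  assumes "open U" "smooth_on U \<phi>" "p \<in> U" "bounded_linear L"
  shows "pd (\<lambda>x. L (\<phi> x)) p w = L (pd \<phi> p w)"
  using pd_eqI[OF bounded_linear.has_derivative[OF assms(4) has_derivative_pd_smooth[OF assms(1-3)]]]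
  by simp

lemma pd_add:
  assumes "open U" "smooth_on U \<phi>" "smooth_on U \<psi>" "p \<in> U"
  shows "pd (\<lambda>x. \<phi> x + \<psi> x) p w = pd \<phi> p w + pd \<psi> p w"
  using pd_eqI[OF has_derivative_add[OF has_derivative_pd_smooth[OF assms(1,2,4)]
        has_derivative_pd_smooth[OF assms(1,3,4)]]] by simp

lemma pd_diff:
  assumes "open U" "smooth_on U \<phi>" "smooth_on U \<psi>" "p \<in> U"
  shows "pd (\<lambda>x. \<phi> x - \<psi> x) p w = pd \<phi> p w - pd \<psi> p w"
  using pd_eqI[OF has_derivative_diff[OF has_derivative_pd_smooth[OF assms(1,2,4)]
        has_derivative_pd_smooth[OF assms(1,3,4)]]] by simp

lemma pd_minus:
  assumes "open U" "smooth_on U \<phi>" "p \<in> U"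
  shows "pd (\<lambda>x. - \<phi> x) p w = - pd \<phi> p w"
  using pd_eqI[OF has_derivative_minus[OF has_derivative_pd_smooth[OF assms]]] by simp

lemma pd_mult:
  fixes \<phi> \<psi> :: "_ \<Rightarrow> real"
  assumes "open U" "smooth_on U \<phi>" "smooth_on U \<psi>" "p \<in> U"
  shows "pd (\<lambda>x. \<phi> x * \<psi> x) p w = pd \<phi> p w * \<psi> p + \<phi> p * pd \<psi> p w"
  using pd_eqI[OF has_derivative_mult[OF has_derivative_pd_smooth[OF assms(1,2,4)]
        has_derivative_pd_smooth[OF assms(1,3,4)]]] by simp

lemma pd_scaleR:
  assumes "open U" "smooth_on U \<phi>" "smooth_on U \<psi>" "p \<in> U"
  shows "pd (\<lambda>x. \<phi> x *\<^sub>R \<psi> x) p w = pd \<phi> p w *\<^sub>R \<psi> p + \<phi> p *\<^sub>R pd \<psi> p w"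
  using pd_eqI[OF has_derivative_scaleR[OF has_derivative_pd_smooth[OF assms(1,2,4)]
        has_derivative_pd_smooth[OF assms(1,3,4)]]] by simp

lemma pd_inner:
  assumes "open U" "smooth_on U \<phi>" "smooth_on U \<psi>" "p \<in> U"
  shows "pd (\<lambda>x. inner (\<phi> x) (\<psi> x)) p w = inner (pd \<phi> p w) (\<psi> p) + inner (\<phi> p) (pd \<psi> p w)"
  using pd_eqI[OF has_derivative_inner[OF has_derivative_pd_smooth[OF assms(1,2,4)]
        has_derivative_pd_smooth[OF assms(1,3,4)]]] by simp

lemma pd_const: "pd (\<lambda>x. c) p w = 0"
  by (simp add: pd_eqI[OF has_derivative_const])

lemma pd_constant_on:
  assumes "open U" "p \<in> U" "\<forall>x\<in>U. \<phi> x = c"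
  shows "pd \<phi> p w = 0"
  using pd_cong_on_open[OF assms(1,2), of \<phi> "\<lambda>x. c"] assms(3) pd_const by metis

section \<open>Symmetry of second derivatives\<close>

lemma has_real_derivative_along_line:
  fixes \<psi> :: "'a::real_normed_vector \<Rightarrow> real"
  assumes "(\<psi> has_derivative D) (at (x0 + s *\<^sub>R c))"
  shows "((\<lambda>s. \<psi> (x0 + s *\<^sub>R c)) has_real_derivative D c) (at s)"
proof -
  have "((\<lambda>s. x0 + s *\<^sub>R c) has_derivative (\<lambda>h. h *\<^sub>R c)) (at s)"
    by (auto intro!: derivative_eq_intros)
  from has_derivative_compose[OF this assms]
  have "((\<lambda>s. \<psi> (x0 + s *\<^sub>R c)) has_derivative (\<lambda>h. D (h *\<^sub>R c))) (at s)" by (simp add: o_def)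
  moreover have "(\<lambda>h. D (h *\<^sub>R c)) = (\<lambda>h. D c * h)"
    using has_derivative_linear[OF assms] by (auto simp: linear_cmul)
  ultimately show ?thesis by (simp add: has_field_derivative_def)
qed

text \<open>The mean value theorem, applied first in direction \<open>a\<close> and then in direction \<open>b\<close>.\<close>

lemma second_difference_mean_value:
  fixes \<phi> :: "'a::real_normed_vector \<Rightarrow> real"
  assumes U: "open U" and sm: "smooth_on U \<phi>" and ball: "ball p d \<subseteq> U"
    and t: "0 < t" "t * (norm a + norm b) < d"
  shows "\<exists>\<xi>\<in>ball p d. \<phi> (p + t *\<^sub>R a + t *\<^sub>R b) - \<phi> (p + t *\<^sub>R a) - \<phi> (p + t *\<^sub>R b) + \<phi> p
            = t * t * pd (\<lambda>y. pd \<phi> y a) \<xi> b"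
proof -
  have in_ball: "p + \<sigma> *\<^sub>R a + \<tau> *\<^sub>R b \<in> ball p d"
    if "0 \<le> \<sigma>" "\<sigma> \<le> t" "0 \<le> \<tau>" "\<tau> \<le> t" for \<sigma> \<tau>
  proof -
    have "norm (\<sigma> *\<^sub>R a + \<tau> *\<^sub>R b) \<le> \<sigma> * norm a + \<tau> * norm b"
      using norm_triangle_ineq[of "\<sigma> *\<^sub>R a" "\<tau> *\<^sub>R b"] that by simp
    also have "\<dots> \<le> t * norm a + t * norm b"
      using that by (intro add_mono mult_right_mono) auto
    finally have "norm (\<sigma> *\<^sub>R a + \<tau> *\<^sub>R b) < d" using t by (simp add: distrib_left)
    then show ?thesis by (metis add.assoc add_diff_cancel_left' dist_commute dist_norm mem_ball)
  qed
  then have inb: "p + \<sigma> *\<^sub>R a + \<tau> *\<^sub>R b \<in> U"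
    if "0 \<le> \<sigma>" "\<sigma> \<le> t" "0 \<le> \<tau>" "\<tau> \<le> t" for \<sigma> \<tau>
    using that ball by blast
  define g where "g s = \<phi> ((p + t *\<^sub>R b) + s *\<^sub>R a) - \<phi> (p + s *\<^sub>R a)" for s
  have "(g has_real_derivative (pd \<phi> ((p + t *\<^sub>R b) + s *\<^sub>R a) a - pd \<phi> (p + s *\<^sub>R a) a)) (at s)"
    if "0 \<le> s" "s \<le> t" for s
    using inb[of s t] inb[of s 0] that t unfolding g_def
    by (intro DERIV_diff has_real_derivative_along_line has_derivative_pd_smooth[OF U sm])
       (auto simp: algebra_simps)
  from MVT2[OF t(1) this] obtain \<sigma> where \<sigma>: "0 < \<sigma>" "\<sigma> < t"
    "g t - g 0 = t * (pd \<phi> ((p + t *\<^sub>R b) + \<sigma> *\<^sub>R a) a - pd \<phi> (p + \<sigma> *\<^sub>R a) a)" by auto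
  define k where "k \<tau> = pd \<phi> ((p + \<sigma> *\<^sub>R a) + \<tau> *\<^sub>R b) a" for \<tau>
  have "(k has_real_derivative pd (\<lambda>y. pd \<phi> y a) ((p + \<sigma> *\<^sub>R a) + \<tau> *\<^sub>R b) b) (at \<tau>)"
    if "0 \<le> \<tau>" "\<tau> \<le> t" for \<tau>
    using inb[of \<sigma> \<tau>] that \<sigma> unfolding k_def
    by (intro has_real_derivative_along_line has_derivative_pd_smooth[OF U smooth_on_pd[OF sm]]) auto
  from MVT2[OF t(1) this] obtain \<tau> where \<tau>: "0 < \<tau>" "\<tau> < t"
    "k t - k 0 = t * pd (\<lambda>y. pd \<phi> y a) ((p + \<sigma> *\<^sub>R a) + \<tau> *\<^sub>R b) b" by auto
  have "\<phi> (p + t *\<^sub>R a + t *\<^sub>R b) - \<phi> (p + t *\<^sub>R a) - \<phi> (p + t *\<^sub>R b) + \<phi> p = g t - g 0"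
    by (simp add: g_def algebra_simps)
  also have "\<dots> = t * (k t - k 0)" using \<sigma>(3) by (simp add: k_def algebra_simps)
  also have "\<dots> = t * t * pd (\<lambda>y. pd \<phi> y a) ((p + \<sigma> *\<^sub>R a) + \<tau> *\<^sub>R b) b" using \<tau>(3) by simp
  finally show ?thesis using in_ball[of \<sigma> \<tau>] \<sigma> \<tau> by auto
qed

lemma mixed_partials_meet:
  fixes \<phi> :: "'a::real_normed_vector \<Rightarrow> real"
  assumes U: "open U" and sm: "smooth_on U \<phi>" and d: "0 < d" "ball p d \<subseteq> U"
  shows "\<exists>\<xi>\<in>ball p d. \<exists>\<eta>\<in>ball p d. pd (\<lambda>y. pd \<phi> y a) \<xi> b = pd (\<lambda>y. pd \<phi> y b) \<eta> a"
proof -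
  define t where "t = d / (2 * (norm a + norm b + 1))"
  have den: "2 * (norm a + norm b + 1) > 0" by (smt (verit) norm_ge_zero)
  then have "0 < t" using d by (simp add: t_def)
  moreover have "t * (norm a + norm b) < d"
  proof -
    have "t * (norm a + norm b) \<le> t * (2 * (norm a + norm b + 1)) / 2"
      using \<open>0 < t\<close> by (simp add: field_simps)
    also have "\<dots> = d / 2" using den by (simp add: t_def)
    finally show ?thesis using d by simp
  qed
  ultimately obtain \<xi> \<eta> where "\<xi> \<in> ball p d" "\<eta> \<in> ball p d"
    and "\<phi> (p + t *\<^sub>R a + t *\<^sub>R b) - \<phi> (p + t *\<^sub>R a) - \<phi> (p + t *\<^sub>R b) + \<phi> p
         = t * t * pd (\<lambda>y. pd \<phi> y a) \<xi> b"
    and "\<phi> (p + t *\<^sub>R b + t *\<^sub>R a) - \<phi> (p + t *\<^sub>R b) - \<phi> (p + t *\<^sub>R a) + \<phi> p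
         = t * t * pd (\<lambda>y. pd \<phi> y b) \<eta> a"
    using second_difference_mean_value[OF U sm d(2), of t a b]
      second_difference_mean_value[OF U sm d(2), of t b a] by (auto simp: add.commute)
  then have "pd (\<lambda>y. pd \<phi> y a) \<xi> b = pd (\<lambda>y. pd \<phi> y b) \<eta> a"
    using \<open>0 < t\<close> by (simp add: algebra_simps)
  with \<open>\<xi> \<in> ball p d\<close> \<open>\<eta> \<in> ball p d\<close> show ?thesis by blast
qed

lemma pd_pd_commute_real:
  fixes \<phi> :: "'a::real_normed_vector \<Rightarrow> real"
  assumes U: "open U" and sm: "smooth_on U \<phi>" and p: "p \<in> U"
  shows "pd (\<lambda>y. pd \<phi> y a) p b = pd (\<lambda>y. pd \<phi> y b) p a"
proof (rule ccontr)
  define A where "A = pd (\<lambda>y. pd \<phi> y a) p b"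
  define B where "B = pd (\<lambda>y. pd \<phi> y b) p a"
  assume "pd (\<lambda>y. pd \<phi> y a) p b \<noteq> pd (\<lambda>y. pd \<phi> y b) p a"
  then have e: "\<bar>A - B\<bar> / 2 > 0" by (simp add: A_def B_def)
  have cont: "continuous_on U (\<lambda>x. pd (\<lambda>y. pd \<phi> y c) x c')" for c c'
    using smooth_on_pd[OF smooth_on_pd[OF sm]] smooth_on_iff_pd differentiable_imp_continuous_on
    by blast
  obtain r where r: "r > 0" "ball p r \<subseteq> U" using U p open_contains_ball by blast
  obtain d1 where d1: "d1 > 0"
    "\<forall>x\<in>U. dist x p < d1 \<longrightarrow> dist (pd (\<lambda>y. pd \<phi> y a) x b) A < \<bar>A - B\<bar> / 2"
    using cont[of a b] p e unfolding continuous_on_iff A_def by blast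
  obtain d2 where d2: "d2 > 0"
    "\<forall>x\<in>U. dist x p < d2 \<longrightarrow> dist (pd (\<lambda>y. pd \<phi> y b) x a) B < \<bar>A - B\<bar> / 2"
    using cont[of b a] p e unfolding continuous_on_iff B_def by blast
  define d where "d = min r (min d1 d2)"
  have d: "0 < d" "ball p d \<subseteq> U" using r d1 d2 by (auto simp: d_def)
  then obtain \<xi> \<eta> where "\<xi> \<in> ball p d" "\<eta> \<in> ball p d"
    and "pd (\<lambda>y. pd \<phi> y a) \<xi> b = pd (\<lambda>y. pd \<phi> y b) \<eta> a"
    using mixed_partials_meet[OF U sm d] by blast
  moreover have "dist (pd (\<lambda>y. pd \<phi> y a) \<xi> b) A < \<bar>A - B\<bar> / 2"
    using d1 \<open>\<xi> \<in> ball p d\<close> d by (auto simp: d_def dist_commute subset_iff)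
  moreover have "dist (pd (\<lambda>y. pd \<phi> y b) \<eta> a) B < \<bar>A - B\<bar> / 2"
    using d2 \<open>\<eta> \<in> ball p d\<close> d by (auto simp: d_def dist_commute subset_iff)
  ultimately show False by (simp add: dist_real_def abs_if split: if_splits)
qed

lemma pd_pd_commute:
  fixes \<phi> :: "'a::real_normed_vector \<Rightarrow> 'b::euclidean_space"
  assumes U: "open U" and sm: "smooth_on U \<phi>" and p: "p \<in> U"
  shows "pd (\<lambda>y. pd \<phi> y a) p b = pd (\<lambda>y. pd \<phi> y b) p a"
proof (rule euclidean_eqI)
  fix i :: 'b
  have bl: "bounded_linear (\<lambda>x. inner x i)" by (rule bounded_linear_inner_left)
  have sm_i: "smooth_on U (\<lambda>x. inner (\<phi> x) i)" by (rule smooth_on_bounded_linear[OF U bl sm])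
  have "inner (pd (\<lambda>y. pd \<phi> y c) p c') i = pd (\<lambda>y. pd (\<lambda>x. inner (\<phi> x) i) y c) p c'" for c c'
  proof -
    have "\<forall>y\<in>U. pd (\<lambda>x. inner (\<phi> x) i) y c = inner (pd \<phi> y c) i"
      using pd_bounded_linear[OF U sm _ bl] by simp
    then have "pd (\<lambda>y. pd (\<lambda>x. inner (\<phi> x) i) y c) p = pd (\<lambda>y. inner (pd \<phi> y c) i) p"
      by (intro pd_cong_on_open[OF U p]) simp
    then have "pd (\<lambda>y. pd (\<lambda>x. inner (\<phi> x) i) y c) p c' = pd (\<lambda>y. inner (pd \<phi> y c) i) p c'"
      by simp
    also have "\<dots> = inner (pd (\<lambda>y. pd \<phi> y c) p c') i"
      by (rule pd_bounded_linear[OF U smooth_on_pd[OF sm] p bl])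
    finally show ?thesis by simp
  qed
  then show "inner (pd (\<lambda>y. pd \<phi> y a) p b) i = inner (pd (\<lambda>y. pd \<phi> y b) p a) i"
    using pd_pd_commute_real[OF U sm_i p] by simp
qed

section \<open>Vector fields\<close>

lemma linear_axis_expansion: "linear L \<Longrightarrow> L (x::real^'n) = (\<Sum>m\<in>UNIV. x $ m *\<^sub>R L (axis m 1))"
proof -
  assume l: "linear L"
  have "x = (\<Sum>m\<in>UNIV. x $ m *\<^sub>R axis m 1)"
    using basis_expansion[of x] by (simp add: scalar_mult_eq_scaleR)
  then have "L x = L (\<Sum>m\<in>UNIV. x $ m *\<^sub>R axis m 1)" by simp
  then show ?thesis by (simp add: linear_sum[OF l] linear_scale[OF l])
qed

lemma pd_axis_expansion:
  fixes \<phi> :: "real^'n \<Rightarrow> 'b::real_normed_vector"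
  assumes "open U" "smooth_on U \<phi>" "r \<in> U"
  shows "pd \<phi> r v = (\<Sum>m\<in>UNIV. v $ m *\<^sub>R pd \<phi> r (axis m 1))"
  using linear_axis_expansion[OF linear_pd[OF assms]] .

lemma smooth_on_pd_field:
  fixes \<phi> :: "real^'n \<Rightarrow> 'b::real_normed_vector" and X :: "real^'n \<Rightarrow> real^'n"
  assumes U: "open U" and sm: "smooth_on U \<phi>" and smX: "smooth_on U X"
  shows "smooth_on U (\<lambda>r. pd \<phi> r (X r))"
proof -
  have "\<forall>r\<in>U. (\<Sum>m\<in>UNIV. X r $ m *\<^sub>R pd \<phi> r (axis m 1)) = pd \<phi> r (X r)"
    using pd_axis_expansion[OF U sm] by simp
  moreover have "smooth_on U (\<lambda>r. \<Sum>m\<in>UNIV. X r $ m *\<^sub>R pd \<phi> r (axis m 1))"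
    using smooth_on_scaleR[OF U smooth_on_component[OF U smX] smooth_on_pd[OF sm]]
    by (intro smooth_on_sum[OF U]) auto
  ultimately show ?thesis by (rule smooth_on_cong[OF U])
qed

text \<open>Product rule for \<open>\<phi>'(X)\<close>, with the term \<open>\<phi>''(X, w)\<close> rewritten by the symmetry of \<open>\<phi>''\<close>.\<close>

lemma pd_pd_field:
  fixes \<phi> :: "real^'n \<Rightarrow> 'b::euclidean_space" and X :: "real^'n \<Rightarrow> real^'n"
  assumes U: "open U" and sm: "smooth_on U \<phi>" and smX: "smooth_on U X" and q: "q \<in> U"
  shows "pd (\<lambda>r. pd \<phi> r (X r)) q w = pd \<phi> q (pd X q w) + pd (\<lambda>r. pd \<phi> r w) q (X q)"
proof -
  have deriv: "((\<lambda>r. \<Sum>m\<in>UNIV. X r $ m *\<^sub>R pd \<phi> r (axis m 1)) has_derivative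
      (\<lambda>w. \<Sum>m\<in>UNIV. X q $ m *\<^sub>R pd (\<lambda>r. pd \<phi> r (axis m 1)) q w
                      + pd X q w $ m *\<^sub>R pd \<phi> q (axis m 1))) (at q)"
    by (intro has_derivative_sum has_derivative_scaleR bounded_linear.has_derivative[OF
        bounded_linear_vec_nth] has_derivative_pd_smooth[OF U _ q] smX smooth_on_pd[OF sm])
  have "\<forall>r\<in>U. (\<Sum>m\<in>UNIV. X r $ m *\<^sub>R pd \<phi> r (axis m 1)) = pd \<phi> r (X r)"
    using pd_axis_expansion[OF U sm] by simp
  from pd_cong_on_open[OF U q this]
  have "pd (\<lambda>r. pd \<phi> r (X r)) q w = pd (\<lambda>r. \<Sum>m\<in>UNIV. X r $ m *\<^sub>R pd \<phi> r (axis m 1)) q w"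
    by simp
  also have "\<dots> = (\<Sum>m\<in>UNIV. X q $ m *\<^sub>R pd (\<lambda>r. pd \<phi> r w) q (axis m 1))
                  + (\<Sum>m\<in>UNIV. pd X q w $ m *\<^sub>R pd \<phi> q (axis m 1))"
    using pd_pd_commute[OF U sm q] by (simp add: pd_eqI[OF deriv] sum.distrib)
  also have "\<dots> = pd (\<lambda>r. pd \<phi> r w) q (X q) + pd \<phi> q (pd X q w)"
    using pd_axis_expansion[OF U smooth_on_pd[OF sm] q, of w "X q", symmetric]
      pd_axis_expansion[OF U sm q, of "pd X q w", symmetric] by simp
  finally show ?thesis by (simp add: add.commute)
qed

lemma orthonormal_family_expansion:
  fixes b :: "'i \<Rightarrow> 'a::euclidean_space"
  assumes fin: "finite I" and dim: "DIM('a) = card I"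
    and on: "\<And>i j. i \<in> I \<Longrightarrow> j \<in> I \<Longrightarrow> inner (b i) (b j) = (if i = j then 1 else 0)"
  shows "x = (\<Sum>i\<in>I. inner x (b i) *\<^sub>R b i)"
proof -
  have inj: "inj_on b I"
  proof (rule inj_onI)
    fix i j assume "i \<in> I" "j \<in> I" "b i = b j"
    then show "i = j" using on[of i j] on[of i i] by (auto split: if_splits)
  qed
  have po: "pairwise orthogonal (b ` I)"
    unfolding pairwise_def orthogonal_def using on by auto
  moreover have "0 \<notin> b ` I" using on by force
  ultimately have "independent (b ` I)" by (rule pairwise_orthogonal_independent)
  moreover have "card (b ` I) = DIM('a)" using card_image[OF inj] dim by simp
  ultimately have "span (b ` I) = UNIV"
    using card_ge_dim_independent[of "b ` I" UNIV] by auto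
  then have "(\<Sum>y\<in>b ` I. inner x y *\<^sub>R y) = x"
    using on fin by (intro orthonormal_basis_expand[OF po]) (auto simp: norm_eq_sqrt_inner)
  then show ?thesis by (simp add: sum.reindex[OF inj])
qed

definition dir_deriv :: "('a::real_normed_vector \<Rightarrow> 'a) \<Rightarrow> ('a \<Rightarrow> 'b::real_normed_vector) \<Rightarrow> 'a \<Rightarrow> 'b"
  where "dir_deriv X \<phi> q = pd \<phi> q (X q)"

lemma dir_deriv_cong:
  "open U \<Longrightarrow> q \<in> U \<Longrightarrow> \<forall>r\<in>U. \<phi> r = \<psi> r \<Longrightarrow> dir_deriv X \<phi> q = dir_deriv X \<psi> q"
  unfolding dir_deriv_def using pd_cong_on_open by metis

lemma dir_deriv_const: "dir_deriv X (\<lambda>r. c) q = 0"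
  unfolding dir_deriv_def by (rule pd_const)

lemma dir_deriv_add:
  "open U \<Longrightarrow> smooth_on U \<phi> \<Longrightarrow> smooth_on U \<psi> \<Longrightarrow> q \<in> U
    \<Longrightarrow> dir_deriv X (\<lambda>r. \<phi> r + \<psi> r) q = dir_deriv X \<phi> q + dir_deriv X \<psi> q"
  unfolding dir_deriv_def by (rule pd_add)

lemma dir_deriv_diff:
  "open U \<Longrightarrow> smooth_on U \<phi> \<Longrightarrow> smooth_on U \<psi> \<Longrightarrow> q \<in> U
    \<Longrightarrow> dir_deriv X (\<lambda>r. \<phi> r - \<psi> r) q = dir_deriv X \<phi> q - dir_deriv X \<psi> q"
  unfolding dir_deriv_def by (rule pd_diff)

lemma dir_deriv_minus:
  "open U \<Longrightarrow> smooth_on U \<phi> \<Longrightarrow> q \<in> U \<Longrightarrow> dir_deriv X (\<lambda>r. - \<phi> r) q = - dir_deriv X \<phi> q"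
  unfolding dir_deriv_def by (rule pd_minus)

lemma dir_deriv_mult:
  fixes \<phi> \<psi> :: "_ \<Rightarrow> real"
  shows "open U \<Longrightarrow> smooth_on U \<phi> \<Longrightarrow> smooth_on U \<psi> \<Longrightarrow> q \<in> U
    \<Longrightarrow> dir_deriv X (\<lambda>r. \<phi> r * \<psi> r) q = dir_deriv X \<phi> q * \<psi> q + \<phi> q * dir_deriv X \<psi> q"
  unfolding dir_deriv_def by (rule pd_mult)

lemma dir_deriv_scaleR:
  "open U \<Longrightarrow> smooth_on U \<phi> \<Longrightarrow> smooth_on U \<psi> \<Longrightarrow> q \<in> U
    \<Longrightarrow> dir_deriv X (\<lambda>r. \<phi> r *\<^sub>R \<psi> r) q = dir_deriv X \<phi> q *\<^sub>R \<psi> q + \<phi> q *\<^sub>R dir_deriv X \<psi> q"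
  unfolding dir_deriv_def by (rule pd_scaleR)

lemma dir_deriv_inner:
  "open U \<Longrightarrow> smooth_on U \<phi> \<Longrightarrow> smooth_on U \<psi> \<Longrightarrow> q \<in> U
    \<Longrightarrow> dir_deriv X (\<lambda>r. inner (\<phi> r) (\<psi> r)) q
        = inner (dir_deriv X \<phi> q) (\<psi> q) + inner (\<phi> q) (dir_deriv X \<psi> q)"
  unfolding dir_deriv_def by (rule pd_inner)

lemma smooth_on_dir_deriv:
  fixes X :: "real^'n \<Rightarrow> real^'n"
  shows "open U \<Longrightarrow> smooth_on U X \<Longrightarrow> smooth_on U \<phi> \<Longrightarrow> smooth_on U (dir_deriv X \<phi>)"
  unfolding dir_deriv_def[abs_def] by (rule smooth_on_pd_field)

lemma dir_deriv_commutator: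
  fixes \<phi> :: "real^'n \<Rightarrow> 'b::euclidean_space" and X Y :: "real^'n \<Rightarrow> real^'n"
  assumes U: "open U" and sm: "smooth_on U \<phi>" and X: "smooth_on U X" and Y: "smooth_on U Y"
    and q: "q \<in> U"
  shows "dir_deriv X (dir_deriv Y \<phi>) q - dir_deriv Y (dir_deriv X \<phi>) q
       = pd \<phi> q (pd Y q (X q) - pd X q (Y q))"
  using pd_pd_field[OF U sm Y q, of "X q"] pd_pd_field[OF U sm X q, of "Y q"]
    pd_pd_commute[OF U sm q, of "X q" "Y q"]
  by (simp add: dir_deriv_def[abs_def] linear_diff[OF linear_pd[OF U sm q]])

section \<open>Divergence and the induced metric\<close>

lemma trace_jacobian: "trace (jacobian W (at q)) = (\<Sum>a\<in>UNIV. pd W q (axis a 1) $ a)"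
  by (simp add: trace_def jacobian_def matrix_def pd_def)

text \<open>The Riemannian divergence \<open>|D| \<Sum>\<^sub>a \<partial>\<^sub>a (W\<^sup>a / |D|)\<close> for the volume density \<open>1 / |D|\<close>:
  near \<open>q\<close> the sign of \<open>D\<close> is constant, so \<open>|D|\<close> can be differentiated.\<close>

lemma weighted_divergence:
  fixes D :: "real^'n \<Rightarrow> real" and W :: "real^'n \<Rightarrow> real^'n"
  assumes U: "open U" and smD: "smooth_on U D" and smW: "smooth_on U W" and q: "q \<in> U"
    and D0: "D q \<noteq> 0"
  shows "\<bar>D q\<bar> * (\<Sum>a\<in>UNIV. pd (\<lambda>r. W r $ a / \<bar>D r\<bar>) q (axis a 1))
       = trace (jacobian W (at q)) - pd D q (W q) / D q"
proof -
  define s where "s = sgn (D q)"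
  have s: "s * s = 1" "\<bar>D q\<bar> * s = D q" using D0 by (auto simp: s_def sgn_if)
  define V where "V = U \<inter> (\<lambda>r. s * D r) -` {0<..}"
  have "continuous_on U (\<lambda>r. s * D r)"
    using smD smooth_on_iff_pd differentiable_imp_continuous_on continuous_on_mult_left by blast
  then have V: "open V" unfolding V_def by (rule continuous_open_preimage[OF _ U]) simp
  have qV: "q \<in> V" using q D0 by (auto simp: V_def s_def sgn_if)
  have local: "\<forall>r\<in>V. W r $ a / \<bar>D r\<bar> = s * (W r $ a / D r)" for a
    using s(1) by (auto simp: V_def s_def sgn_if abs_if split: if_splits)
  have cong: "pd (\<lambda>r. W r $ a / \<bar>D r\<bar>) q = pd (\<lambda>r. s * (W r $ a / D r)) q" for a
    by (rule pd_cong_on_open[OF V qV local])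
  have deriv: "((\<lambda>r. s * (W r $ a / D r)) has_derivative
      (\<lambda>w. s * ((pd W q w $ a * D q - W q $ a * pd D q w) / (D q * D q)))) (at q)" for a
    by (intro has_derivative_mult_right has_derivative_divide' D0 has_derivative_pd_smooth[OF U smD q]
        bounded_linear.has_derivative[OF bounded_linear_vec_nth has_derivative_pd_smooth[OF U smW q]])
  have "pd (\<lambda>r. W r $ a / \<bar>D r\<bar>) q w
      = s * ((pd W q w $ a * D q - W q $ a * pd D q w) / (D q * D q))" for a w
    unfolding cong pd_eqI[OF deriv] ..
  then have "\<bar>D q\<bar> * (\<Sum>a\<in>UNIV. pd (\<lambda>r. W r $ a / \<bar>D r\<bar>) q (axis a 1))
      = (\<Sum>a\<in>UNIV. \<bar>D q\<bar> * s * ((pd W q (axis a 1) $ a * D q - W q $ a * pd D q (axis a 1)) / (D q * D q)))"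
    by (simp add: sum_distrib_left mult.assoc)
  also have "\<dots> = (\<Sum>a\<in>UNIV. pd W q (axis a 1) $ a - W q $ a * pd D q (axis a 1) / D q)"
    unfolding s(2) using D0 by (intro sum.cong refl) (simp add: field_simps)
  also have "\<dots> = (\<Sum>a\<in>UNIV. pd W q (axis a 1) $ a) - (\<Sum>a\<in>UNIV. W q $ a * pd D q (axis a 1)) / D q"
    by (simp add: sum_subtractf sum_divide_distrib)
  finally show ?thesis
    by (simp add: trace_jacobian pd_axis_expansion[OF U smD q, of "W q"])
qed

lemma matrix_inv_eqI:
  fixes A :: "'a::semiring_1^'n^'m"
  assumes "A ** B = mat 1" "B ** A = mat 1"
  shows "matrix_inv A = B"
proof -
  have inv: "A ** matrix_inv A = mat 1 \<and> matrix_inv A ** A = mat 1"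
    unfolding matrix_inv_def by (rule someI[of _ B]) (use assms in blast)
  have "matrix_inv A = matrix_inv A ** (A ** B)" using assms(1) by (simp add: matrix_mul_rid)
  also have "\<dots> = (matrix_inv A ** A) ** B" by (simp add: matrix_mul_assoc)
  also have "\<dots> = B" using inv by (simp add: matrix_mul_lid)
  finally show ?thesis .
qed

lemma bounded_bilinear_cross3: "bounded_bilinear cross3"
  using bilinear_cross bilinear_conv_bounded_bilinear by blast

lemma laplacian_cong:
  assumes U: "open U" and q: "q \<in> U" and eq: "\<forall>r\<in>U. \<phi> r = \<psi> r"
  shows "laplacian f \<phi> q = laplacian f \<psi> q"
proof -
  have "\<forall>r\<in>U. pd \<phi> r = pd \<psi> r" using pd_cong_on_open[OF U _ eq] by blast
  then have "pd (\<lambda>r. sqrt (det (Gmat f r)) * (\<Sum>j\<in>UNIV. matrix_inv (Gmat f r) $ i $ j * pd \<phi> r (axis j 1))) q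
      = pd (\<lambda>r. sqrt (det (Gmat f r)) * (\<Sum>j\<in>UNIV. matrix_inv (Gmat f r) $ i $ j * pd \<psi> r (axis j 1))) q" for i
    by (intro pd_cong_on_open[OF U q]) simp
  then show ?thesis by (simp add: laplacian_def)
qed

lemma grad_sq_cong:
  assumes "open U" "q \<in> U" "\<forall>r\<in>U. \<phi> r = \<psi> r"
  shows "grad_sq f \<phi> q = grad_sq f \<psi> q"
  using pd_cong_on_open[OF assms] by (simp add: grad_sq_def)

text \<open>For an induced metric the Christoffel symbols are the normal-free part of the second
  derivative, so \<open>\<nabla>\<^sub>X Y\<close> is the tangential part of the ambient derivative of \<open>df(Y)\<close>.\<close>

lemma LC_inner_induced:
  fixes f :: "real^3 \<Rightarrow> real^5"
  assumes U: "open U" and f: "smooth_on U f" and Y: "smooth_on U Y" and q: "q \<in> U"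
  shows "LC_inner f X Y Z q = inner (pd (\<lambda>r. pd f r (Y r)) q (X q)) (pd f q (Z q))"
proof -
  define S where "S a b = pd (\<lambda>r. pd f r a) q b" for a b
  have S_sym: "S a b = S b a" for a b unfolding S_def by (rule pd_pd_commute[OF U f q])
  have "pd (\<lambda>r. gm f r A B) q C = inner (S A C) (pd f q B) + inner (pd f q A) (S B C)" for A B C
    unfolding gm_def S_def by (rule pd_inner[OF U smooth_on_pd[OF f] smooth_on_pd[OF f] q])
  then have "Gam1 f q A B C = inner (S A B) (pd f q C)" for A B C
    unfolding Gam1_def using S_sym[of A C] S_sym[of B C] S_sym[of B A] by (simp add: inner_commute)
  moreover have "pd (\<lambda>r. pd f r (Y r)) q (X q) = pd f q (pd Y q (X q)) + S (X q) (Y q)"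
    unfolding S_def by (rule pd_pd_field[OF U f Y q])
  ultimately show ?thesis by (simp add: LC_inner_def gm_def inner_add_left S_sym)
qed

section \<open>The principal frame\<close>

definition kronecker :: "nat \<Rightarrow> nat \<Rightarrow> real" where
  "kronecker a b = (if a = b then 1 else 0)"

(* Keeps the frame index 1 a numeral instead of Suc 0 under simp. *)
declare One_nat_def [simp del]

locale principal_frame =
  fixes U :: "(real^3) set" and f :: "real^3 \<Rightarrow> real^5" and N :: "real^3 \<Rightarrow> real^5"
    and lam :: "real^3 \<Rightarrow> real" and e1 e2 e3 :: "real^3 \<Rightarrow> real^3"
  assumes U_open: "open U"
    and f_smooth: "smooth_on U f"
    and f_sphere: "\<forall>p\<in>U. norm (f p) = 1"
    and f_immersion: "\<forall>p\<in>U. inj (pd f p)"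
    and N_smooth: "smooth_on U N"
    and N_unit: "\<forall>p\<in>U. norm (N p) = 1"
    and N_normal: "\<forall>p\<in>U. inner (N p) (f p) = 0 \<and> (\<forall>w. inner (N p) (pd f p w) = 0)"
    and lam_smooth: "smooth_on U lam"
    and lam_pos: "\<forall>p\<in>U. lam p > 0"
    and e_smooth: "smooth_on U e1" "smooth_on U e2" "smooth_on U e3"
    and e_orthonormal: "\<forall>p\<in>U.
        gm f p (e1 p) (e1 p) = 1 \<and> gm f p (e2 p) (e2 p) = 1 \<and> gm f p (e3 p) (e3 p) = 1 \<and>
        gm f p (e1 p) (e2 p) = 0 \<and> gm f p (e1 p) (e3 p) = 0 \<and> gm f p (e2 p) (e3 p) = 0"
    and e_principal: "\<forall>p\<in>U.
        pd N p (e1 p) = - (lam p *\<^sub>R pd f p (e1 p)) \<and>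
        pd N p (e2 p) = 0 \<and>
        pd N p (e3 p) = lam p *\<^sub>R pd f p (e3 p)"
begin

abbreviation "Idx \<equiv> {1, 2, 3 :: nat}"

definition E :: "nat \<Rightarrow> real^3 \<Rightarrow> real^3" where
  "E i = (if i = 1 then e1 else if i = 2 then e2 else e3)"

definition \<kappa> :: "nat \<Rightarrow> real^3 \<Rightarrow> real" where
  "\<kappa> i = (if i = 1 then lam else if i = 2 then (\<lambda>q. 0) else (\<lambda>q. - lam q))"

definition F :: "nat \<Rightarrow> real^3 \<Rightarrow> real^5" where
  "F i = dir_deriv (E i) f"

text \<open>\<open>\<omega> i k l = \<langle>\<nabla>\<^bsub>E i\<^esub> E k, E l\<rangle>\<close>, computed as the component of the ambient derivative
  \<open>D\<^bsub>E i\<^esub> F k\<close> along \<open>F l\<close>.\<close>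

definition \<omega> :: "nat \<Rightarrow> nat \<Rightarrow> nat \<Rightarrow> real^3 \<Rightarrow> real" where
  "\<omega> i k l q = inner (dir_deriv (E i) (F k) q) (F l q)"

definition ambient_frame :: "real^3 \<Rightarrow> nat \<Rightarrow> real^5" where
  "ambient_frame q k = (if k = 0 then f q else if k = 4 then N q else F k q)"

lemma sum_Idx: "(\<Sum>k\<in>Idx. g k) = g 1 + g 2 + g 3"
  by (simp add: add.assoc)

lemma sum_kronecker: "l \<in> Idx \<Longrightarrow> (\<Sum>k\<in>Idx. g k * kronecker k l) = g l"
  by (auto simp: kronecker_def)

lemma \<kappa>_simps: "\<kappa> 1 = lam" "\<kappa> 2 = (\<lambda>q. 0)" "\<kappa> 3 = (\<lambda>q. - lam q)"
  by (simp_all add: \<kappa>_def)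

lemma smooth_E: "smooth_on U (E i)"
  using e_smooth by (simp add: E_def)

lemma smooth_dir_deriv: "smooth_on U \<phi> \<Longrightarrow> smooth_on U (dir_deriv (E i) \<phi>)"
  by (rule smooth_on_dir_deriv[OF U_open smooth_E])

lemma smooth_F: "smooth_on U (F i)"
  unfolding F_def by (rule smooth_dir_deriv[OF f_smooth])

lemma smooth_\<omega>: "smooth_on U (\<omega> i k l)"
  unfolding \<omega>_def[abs_def] by (rule smooth_on_inner[OF U_open smooth_dir_deriv[OF smooth_F] smooth_F])

lemma smooth_\<kappa>: "smooth_on U (\<kappa> i)"
  by (simp add: \<kappa>_def lam_smooth smooth_on_const smooth_on_minus[OF U_open lam_smooth])

lemma pd_f_orthogonal_f: "q \<in> U \<Longrightarrow> inner (pd f q w) (f q) = 0"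
  using pd_constant_on[OF U_open _ , of q "\<lambda>x. inner (f x) (f x)" 1 w] f_sphere
    pd_inner[OF U_open f_smooth f_smooth, of q w]
  by (simp add: dot_square_norm inner_commute)

lemma F_orthonormal: "q \<in> U \<Longrightarrow> i \<in> Idx \<Longrightarrow> j \<in> Idx \<Longrightarrow> inner (F i q) (F j q) = kronecker i j"
  using e_orthonormal by (auto simp: F_def dir_deriv_def E_def gm_def kronecker_def inner_commute)

lemma F_orthogonal_f: "q \<in> U \<Longrightarrow> inner (F i q) (f q) = 0"
  unfolding F_def dir_deriv_def by (rule pd_f_orthogonal_f)

lemma F_orthogonal_N: "q \<in> U \<Longrightarrow> inner (F i q) (N q) = 0"
  using N_normal by (simp add: F_def dir_deriv_def inner_commute)

lemma ambient_frame_orthonormal: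
  assumes q: "q \<in> U" and ij: "i \<in> {0, 1, 2, 3, 4}" "j \<in> {0, 1, 2, 3, 4}"
  shows "inner (ambient_frame q i) (ambient_frame q j) = (if i = j then 1 else 0)"
proof -
  have "inner (f q) (f q) = 1" "inner (N q) (N q) = 1" "inner (N q) (f q) = 0"
    using f_sphere N_unit N_normal q by (simp_all add: dot_square_norm)
  then show ?thesis using ij F_orthogonal_f[OF q] F_orthogonal_N[OF q] F_orthonormal[OF q]
    by (auto simp: ambient_frame_def kronecker_def inner_commute)
qed

lemma ambient_parseval:
  assumes q: "q \<in> U"
  shows "inner x y = inner x (f q) * inner y (f q) + inner x (N q) * inner y (N q)
                     + (\<Sum>k\<in>Idx. inner x (F k q) * inner y (F k q))"
proof -
  have "x = (\<Sum>i\<in>{0, 1, 2, 3, 4}. inner x (ambient_frame q i) *\<^sub>R ambient_frame q i)"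
    by (rule orthonormal_family_expansion) (use ambient_frame_orthonormal[OF q] in auto)
  also have "\<dots> = inner x (f q) *\<^sub>R f q + inner x (N q) *\<^sub>R N q + (\<Sum>k\<in>Idx. inner x (F k q) *\<^sub>R F k q)"
    by (simp add: ambient_frame_def algebra_simps)
  finally have x_eq: "x = inner x (f q) *\<^sub>R f q + inner x (N q) *\<^sub>R N q
                          + (\<Sum>k\<in>Idx. inner x (F k q) *\<^sub>R F k q)" .
  show ?thesis
    by (subst (1) x_eq) (simp add: inner_commute[of _ y] inner_add_right inner_sum_right)
qed

text \<open>The frame \<open>E\<close> is a basis with dual basis \<open>\<langle>df _, F k\<rangle>\<close>: the remainder \<open>r\<close> has \<open>df r\<close>
  orthogonal to all of \<open>f, N, F k\<close>, so \<open>df r = 0\<close>, and \<open>r = 0\<close> because \<open>f\<close> is an immersion.\<close>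

lemma tangent_expansion:
  assumes q: "q \<in> U"
  shows "w = (\<Sum>k\<in>Idx. inner (pd f q w) (F k q) *\<^sub>R E k q)"
proof -
  define r where "r = w - (\<Sum>k\<in>Idx. inner (pd f q w) (F k q) *\<^sub>R E k q)"
  have l: "linear (pd f q)" by (rule linear_pd[OF U_open f_smooth q])
  have pr: "pd f q r = pd f q w - (\<Sum>k\<in>Idx. inner (pd f q w) (F k q) *\<^sub>R F k q)"
    unfolding r_def by (simp add: linear_diff[OF l] linear_add[OF l] linear_scale[OF l] F_def dir_deriv_def)
  have "inner (pd f q r) (F j q) = 0" if "j \<in> Idx" for j
    using that F_orthonormal[OF q] by (auto simp: pr inner_diff_left inner_add_left kronecker_def)
  moreover have "inner (pd f q r) (f q) = 0" "inner (pd f q r) (N q) = 0"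
    using pd_f_orthogonal_f[OF q] N_normal q by (simp_all add: inner_commute)
  ultimately have "inner (pd f q r) (pd f q r) = 0"
    using ambient_parseval[OF q, of "pd f q r" "pd f q r"] by simp
  then have "pd f q r = pd f q 0" using linear_0[OF l] by simp
  then have "r = 0" using f_immersion q by (auto dest: injD)
  then show ?thesis by (simp add: r_def)
qed

lemma dir_deriv_N: "q \<in> U \<Longrightarrow> i \<in> Idx \<Longrightarrow> dir_deriv (E i) N q = - (\<kappa> i q *\<^sub>R F i q)"
  using e_principal by (auto simp: dir_deriv_def E_def \<kappa>_def F_def)

lemma \<omega>_antisym:
  assumes q: "q \<in> U" and kl: "k \<in> Idx" "l \<in> Idx"
  shows "\<omega> i k l q = - \<omega> i l k q"
proof -
  have "\<forall>x\<in>U. inner (F k x) (F l x) = kronecker k l" using F_orthonormal kl by blast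
  then have "dir_deriv (E i) (\<lambda>x. inner (F k x) (F l x)) q = 0"
    unfolding dir_deriv_def by (rule pd_constant_on[OF U_open q])
  then show ?thesis
    using dir_deriv_inner[OF U_open smooth_F smooth_F q] by (simp add: \<omega>_def inner_commute)
qed

lemma \<omega>_diag: "q \<in> U \<Longrightarrow> k \<in> Idx \<Longrightarrow> \<omega> i k k q = 0"
  using \<omega>_antisym[of q k k i] by simp

lemma inner_dir_deriv_F_f:
  assumes q: "q \<in> U" and ik: "i \<in> Idx" "k \<in> Idx"
  shows "inner (dir_deriv (E i) (F k) q) (f q) = - kronecker i k"
proof -
  have "\<forall>x\<in>U. inner (F k x) (f x) = 0" using F_orthogonal_f by blast
  then have "dir_deriv (E i) (\<lambda>x. inner (F k x) (f x)) q = 0"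
    unfolding dir_deriv_def by (rule pd_constant_on[OF U_open q])
  then show ?thesis
    using dir_deriv_inner[OF U_open smooth_F f_smooth q] F_orthonormal[OF q ik(2,1)]
    by (simp add: F_def kronecker_def split: if_splits)
qed

lemma inner_dir_deriv_F_N:
  assumes q: "q \<in> U" and ik: "i \<in> Idx" "k \<in> Idx"
  shows "inner (dir_deriv (E i) (F k) q) (N q) = \<kappa> i q * kronecker i k"
proof -
  have "\<forall>x\<in>U. inner (F k x) (N x) = 0" using F_orthogonal_N by blast
  then have "dir_deriv (E i) (\<lambda>x. inner (F k x) (N x)) q = 0"
    unfolding dir_deriv_def by (rule pd_constant_on[OF U_open q])
  then show ?thesis
    using dir_deriv_inner[OF U_open smooth_F N_smooth q] F_orthonormal[OF q ik(2,1)] dir_deriv_N[OF q ik(1)]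
    by (simp add: kronecker_def inner_minus_right split: if_splits)
qed

lemma bracket_expansion:
  assumes q: "q \<in> U"
  shows "pd (E j) q (E i q) - pd (E i) q (E j q) = (\<Sum>k\<in>Idx. (\<omega> i j k q - \<omega> j i k q) *\<^sub>R E k q)"
proof -
  have "inner (pd f q (pd (E j) q (E i q) - pd (E i) q (E j q))) (F k q) = \<omega> i j k q - \<omega> j i k q" for k
    using dir_deriv_commutator[OF U_open f_smooth smooth_E smooth_E q, of i j, symmetric]
    by (simp add: \<omega>_def F_def inner_diff_left)
  then show ?thesis using tangent_expansion[OF q, of "pd (E j) q (E i q) - pd (E i) q (E j q)"] by simp
qed

lemma dir_deriv_commutator_frame:
  fixes \<phi> :: "real^3 \<Rightarrow> 'b::euclidean_space"
  assumes q: "q \<in> U" and sm: "smooth_on U \<phi>"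
  shows "dir_deriv (E i) (dir_deriv (E j) \<phi>) q - dir_deriv (E j) (dir_deriv (E i) \<phi>) q
       = (\<Sum>k\<in>Idx. (\<omega> i j k q - \<omega> j i k q) *\<^sub>R dir_deriv (E k) \<phi> q)"
  unfolding dir_deriv_commutator[OF U_open sm smooth_E smooth_E q] bracket_expansion[OF q]
  by (simp add: linear_add[OF linear_pd[OF U_open sm q]] linear_scale[OF linear_pd[OF U_open sm q]]
      dir_deriv_def)

section \<open>Codazzi and Gauss equations\<close>

lemma dir_deriv_dir_deriv_N:
  assumes q: "q \<in> U" and j: "j \<in> Idx"
  shows "dir_deriv (E i) (dir_deriv (E j) N) q
       = - (dir_deriv (E i) (\<kappa> j) q *\<^sub>R F j q + \<kappa> j q *\<^sub>R dir_deriv (E i) (F j) q)"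
proof -
  have "dir_deriv (E i) (dir_deriv (E j) N) q = dir_deriv (E i) (\<lambda>r. - (\<kappa> j r *\<^sub>R F j r)) q"
    by (rule dir_deriv_cong[OF U_open q]) (use dir_deriv_N j in auto)
  then show ?thesis
    using dir_deriv_minus[OF U_open smooth_on_scaleR[OF U_open smooth_\<kappa> smooth_F] q]
      dir_deriv_scaleR[OF U_open smooth_\<kappa> smooth_F q] by simp
qed

text \<open>Codazzi equation: the commutator of \<open>E i\<close>, \<open>E j\<close> applied to \<open>N\<close>, in direction \<open>F l\<close>.\<close>

lemma codazzi:
  assumes q: "q \<in> U" and ijl: "i \<in> Idx" "j \<in> Idx" "l \<in> Idx"
  shows "- dir_deriv (E i) (\<kappa> j) q * kronecker j l - \<kappa> j q * \<omega> i j l q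
         + dir_deriv (E j) (\<kappa> i) q * kronecker i l + \<kappa> i q * \<omega> j i l q
       = - \<kappa> l q * (\<omega> i j l q - \<omega> j i l q)"
proof -
  have "inner (dir_deriv (E i) (dir_deriv (E j) N) q - dir_deriv (E j) (dir_deriv (E i) N) q) (F l q)
      = - dir_deriv (E i) (\<kappa> j) q * kronecker j l - \<kappa> j q * \<omega> i j l q
        + dir_deriv (E j) (\<kappa> i) q * kronecker i l + \<kappa> i q * \<omega> j i l q"
    unfolding dir_deriv_dir_deriv_N[OF q ijl(2)] dir_deriv_dir_deriv_N[OF q ijl(1)]
    using F_orthonormal[OF q ijl(2,3)] F_orthonormal[OF q ijl(1,3)]
    by (simp add: inner_diff_left inner_add_left \<omega>_def algebra_simps)
  moreover have "inner (\<Sum>k\<in>Idx. (\<omega> i j k q - \<omega> j i k q) *\<^sub>R dir_deriv (E k) N q) (F l q)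
      = (\<Sum>k\<in>Idx. (- (\<omega> i j k q - \<omega> j i k q) * \<kappa> k q) * kronecker k l)"
    unfolding inner_sum_left
    by (intro sum.cong refl) (use dir_deriv_N[OF q] F_orthonormal[OF q _ ijl(3)] in \<open>auto simp: algebra_simps\<close>)
  moreover have "\<dots> = - \<kappa> l q * (\<omega> i j l q - \<omega> j i l q)"
    by (subst sum_kronecker[OF ijl(3)]) (simp_all add: algebra_simps)
  ultimately show ?thesis using dir_deriv_commutator_frame[OF q N_smooth, of i j] by simp
qed

lemma inner_dir_deriv_F:
  assumes q: "q \<in> U" and ijkl: "i \<in> Idx" "j \<in> Idx" "k \<in> Idx" "l \<in> Idx"
  shows "inner (dir_deriv (E j) (F k) q) (dir_deriv (E i) (F l) q)
       = kronecker j k * kronecker i l + \<kappa> j q * kronecker j k * (\<kappa> i q * kronecker i l)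
         + (\<Sum>m\<in>Idx. \<omega> j k m q * \<omega> i l m q)"
  using ambient_parseval[OF q, of "dir_deriv (E j) (F k) q" "dir_deriv (E i) (F l) q"]
    inner_dir_deriv_F_f[OF q ijkl(2,3)] inner_dir_deriv_F_f[OF q ijkl(1,4)]
    inner_dir_deriv_F_N[OF q ijkl(2,3)] inner_dir_deriv_F_N[OF q ijkl(1,4)]
  by (simp add: \<omega>_def)

text \<open>Gauss equation: the commutator of \<open>E i\<close>, \<open>E j\<close> applied to \<open>F k\<close>, in direction \<open>F l\<close>.\<close>

lemma gauss:
  assumes q: "q \<in> U" and ijkl: "i \<in> Idx" "j \<in> Idx" "k \<in> Idx" "l \<in> Idx"
  shows "dir_deriv (E i) (\<omega> j k l) q - dir_deriv (E j) (\<omega> i k l) q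
         - inner (dir_deriv (E j) (F k) q) (dir_deriv (E i) (F l) q)
         + inner (dir_deriv (E i) (F k) q) (dir_deriv (E j) (F l) q)
       = (\<Sum>m\<in>Idx. (\<omega> i j m q - \<omega> j i m q) * \<omega> m k l q)"
proof -
  have D: "dir_deriv (E a) (\<omega> b k l) q = inner (dir_deriv (E a) (dir_deriv (E b) (F k)) q) (F l q)
      + inner (dir_deriv (E b) (F k) q) (dir_deriv (E a) (F l) q)" for a b
    unfolding \<omega>_def[abs_def] by (rule dir_deriv_inner[OF U_open smooth_dir_deriv[OF smooth_F] smooth_F q])
  have "inner (dir_deriv (E i) (dir_deriv (E j) (F k)) q - dir_deriv (E j) (dir_deriv (E i) (F k)) q) (F l q)
      = (\<Sum>m\<in>Idx. (\<omega> i j m q - \<omega> j i m q) * \<omega> m k l q)"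
    unfolding dir_deriv_commutator_frame[OF q smooth_F] inner_sum_left by (simp add: \<omega>_def)
  then show ?thesis using D[of i j] D[of j i] by (simp add: inner_diff_left inner_diff_right inner_commute)
qed

definition u :: "real^3 \<Rightarrow> real" where
  "u = \<omega> 3 1 2"

definition v :: "real^3 \<Rightarrow> real" where
  "v q = dir_deriv (E 2) lam q / lam q"

lemma smooth_u: "smooth_on U u"
  unfolding u_def by (rule smooth_\<omega>)

lemma smooth_v: "smooth_on U v"
proof -
  have "smooth_on U (\<lambda>q. dir_deriv (E 2) lam q * inverse (lam q))"
    using lam_pos by (intro smooth_on_mult[OF U_open smooth_dir_deriv[OF lam_smooth]]
        smooth_on_inverse[OF U_open lam_smooth]) auto
  then show ?thesis by (simp add: v_def[abs_def] divide_inverse)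
qed

lemma codazzi_consequences:
  assumes q: "q \<in> U"
  shows "dir_deriv (E 2) lam q = - lam q * \<omega> 1 2 1 q" "\<omega> 2 1 2 q = 0" "\<omega> 1 2 3 q = 2 * \<omega> 2 1 3 q"
    "dir_deriv (E 2) lam q = - lam q * \<omega> 3 2 3 q" "\<omega> 2 3 2 q = 0" "\<omega> 1 3 2 q = - \<omega> 3 1 2 q"
proof -
  have lp: "lam q > 0" using lam_pos q by blast
  note s = \<kappa>_simps kronecker_def dir_deriv_const dir_deriv_minus[OF U_open lam_smooth q]
  have "dir_deriv (E 2) lam q + lam q * \<omega> 2 1 1 q = - lam q * (\<omega> 1 2 1 q - \<omega> 2 1 1 q)"
    using codazzi[OF q, of 1 2 1] by (simp add: s)
  then show "dir_deriv (E 2) lam q = - lam q * \<omega> 1 2 1 q" by (simp add: algebra_simps)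
  have "lam q * \<omega> 2 1 2 q = 0" using codazzi[OF q, of 1 2 2] by (simp add: s)
  then show "\<omega> 2 1 2 q = 0" using lp by simp
  have "lam q * \<omega> 2 1 3 q = lam q * (\<omega> 1 2 3 q - \<omega> 2 1 3 q)"
    using codazzi[OF q, of 1 2 3] by (simp add: s)
  then show "\<omega> 1 2 3 q = 2 * \<omega> 2 1 3 q" using lp by (simp add: algebra_simps)
  have "dir_deriv (E 2) lam q + lam q * \<omega> 2 3 3 q = lam q * (\<omega> 2 3 3 q - \<omega> 3 2 3 q)"
    using codazzi[OF q, of 2 3 3] by (simp add: s)
  then show "dir_deriv (E 2) lam q = - lam q * \<omega> 3 2 3 q" by (simp add: algebra_simps)
  have "lam q * \<omega> 2 3 2 q = 0" using codazzi[OF q, of 2 3 2] by (simp add: s)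
  then show "\<omega> 2 3 2 q = 0" using lp by simp
  have "lam q * \<omega> 1 3 2 q + lam q * \<omega> 3 1 2 q = 0" using codazzi[OF q, of 1 3 2] by (simp add: s)
  then have "lam q * (\<omega> 1 3 2 q + \<omega> 3 1 2 q) = 0" by (simp add: algebra_simps)
  then show "\<omega> 1 3 2 q = - \<omega> 3 1 2 q" using lp by (simp add: add_eq_0_iff)
qed

lemma \<omega>_table:
  assumes q: "q \<in> U"
  shows "\<omega> 1 1 2 q = v q" "\<omega> 2 1 2 q = 0" "\<omega> 3 1 2 q = u q"
    "\<omega> 1 2 1 q = - v q" "\<omega> 2 2 1 q = 0" "\<omega> 3 2 1 q = - u q"
    "\<omega> 2 1 3 q = u q / 2" "\<omega> 1 3 1 q = - \<omega> 1 1 3 q" "\<omega> 2 3 1 q = - u q / 2"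
    "\<omega> 3 3 1 q = - \<omega> 3 1 3 q" "\<omega> 1 2 3 q = u q" "\<omega> 2 2 3 q = 0" "\<omega> 3 2 3 q = - v q"
    "\<omega> 1 3 2 q = - u q" "\<omega> 2 3 2 q = 0" "\<omega> 3 3 2 q = v q"
    "\<omega> i 1 1 q = 0" "\<omega> i 2 2 q = 0" "\<omega> i 3 3 q = 0"
proof -
  have lp: "lam q > 0" using lam_pos q by blast
  note c = codazzi_consequences[OF q]
  have a: "\<omega> i k l q = - \<omega> i l k q" if "k \<in> Idx" "l \<in> Idx" for i k l
    using \<omega>_antisym[OF q that] .
  show g121: "\<omega> 1 2 1 q = - v q" using c(1) lp by (simp add: v_def field_simps)
  show "\<omega> 1 1 2 q = v q" using a[where i=1 and k=1 and l=2] g121 by simp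
  show "\<omega> 2 1 2 q = 0" by (rule c(2))
  show "\<omega> 3 1 2 q = u q" by (simp add: u_def)
  show "\<omega> 2 2 1 q = 0" using a[where i=2 and k=2 and l=1] c(2) by simp
  show "\<omega> 1 3 2 q = - u q" using c(6) by (simp add: u_def)
  show g123: "\<omega> 1 2 3 q = u q" using a[where i=1 and k=2 and l=3] c(6) by (simp add: u_def)
  show "\<omega> 3 2 1 q = - u q" using a[where i=3 and k=2 and l=1] by (simp add: u_def)
  show g213: "\<omega> 2 1 3 q = u q / 2" using c(3) g123 by simp
  show "\<omega> 1 3 1 q = - \<omega> 1 1 3 q" using a[where i=1 and k=3 and l=1] by simp
  show "\<omega> 2 3 1 q = - u q / 2" using a[where i=2 and k=3 and l=1] g213 by simp
  show "\<omega> 3 3 1 q = - \<omega> 3 1 3 q" using a[where i=3 and k=3 and l=1] by simp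
  show "\<omega> 2 2 3 q = 0" using a[where i=2 and k=2 and l=3] c(5) by simp
  show g323: "\<omega> 3 2 3 q = - v q" using c(4) lp by (simp add: v_def field_simps)
  show "\<omega> 2 3 2 q = 0" by (rule c(5))
  show "\<omega> 3 3 2 q = v q" using a[where i=3 and k=3 and l=2] g323 by simp
  show "\<omega> i 1 1 q = 0" "\<omega> i 2 2 q = 0" "\<omega> i 3 3 q = 0" using \<omega>_diag[OF q] by auto
qed

lemma dir_deriv_\<omega>:
  assumes q: "q \<in> U"
  shows "dir_deriv X (\<omega> 2 2 1) q = 0" "dir_deriv X (\<omega> 2 2 3) q = 0"
    "dir_deriv X (\<omega> 1 2 1) q = - dir_deriv X v q" "dir_deriv X (\<omega> 1 2 3) q = dir_deriv X u q"
    "dir_deriv X (\<omega> 3 3 2) q = dir_deriv X v q" "dir_deriv X (\<omega> 1 3 2) q = - dir_deriv X u q"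
    "dir_deriv X (\<omega> 3 2 1) q = - dir_deriv X u q"
proof -
  note cong = dir_deriv_cong[OF U_open q, of _ _ X]
  show "dir_deriv X (\<omega> 2 2 1) q = 0" "dir_deriv X (\<omega> 2 2 3) q = 0"
    using cong[of "\<omega> 2 2 1" "\<lambda>r. 0"] cong[of "\<omega> 2 2 3" "\<lambda>r. 0"] \<omega>_table
    by (simp_all add: dir_deriv_const)
  show "dir_deriv X (\<omega> 1 2 3) q = dir_deriv X u q" "dir_deriv X (\<omega> 3 3 2) q = dir_deriv X v q"
    using cong[of "\<omega> 1 2 3" u] cong[of "\<omega> 3 3 2" v] \<omega>_table by simp_all
  show "dir_deriv X (\<omega> 1 2 1) q = - dir_deriv X v q"
    using cong[of "\<omega> 1 2 1" "\<lambda>r. - v r"] \<omega>_table dir_deriv_minus[OF U_open smooth_v q] by simp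
  show "dir_deriv X (\<omega> 1 3 2) q = - dir_deriv X u q" "dir_deriv X (\<omega> 3 2 1) q = - dir_deriv X u q"
    using cong[of "\<omega> 1 3 2" "\<lambda>r. - u r"] cong[of "\<omega> 3 2 1" "\<lambda>r. - u r"] \<omega>_table
      dir_deriv_minus[OF U_open smooth_u q] by simp_all
qed

lemma gauss_u_v:
  assumes q: "q \<in> U"
  shows "dir_deriv (E 2) v q = 1 + (v q)\<^sup>2 - (u q)\<^sup>2"
    "dir_deriv (E 2) u q = 2 * u q * v q"
    "dir_deriv (E 1) v q = - dir_deriv (E 3) u q"
    "dir_deriv (E 3) v q = dir_deriv (E 1) u q"
proof -
  note s = \<omega>_table[OF q] dir_deriv_\<omega>[OF q] inner_dir_deriv_F[OF q] sum_Idx kronecker_def \<kappa>_simps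
  show "dir_deriv (E 2) v q = 1 + (v q)\<^sup>2 - (u q)\<^sup>2"
    using gauss[OF q, of 1 2 2 1] by (simp add: s power2_eq_square algebra_simps)
  show "dir_deriv (E 2) u q = 2 * u q * v q"
    using gauss[OF q, of 1 2 2 3] by (simp add: s power2_eq_square algebra_simps)
  show "dir_deriv (E 1) v q = - dir_deriv (E 3) u q"
    using gauss[OF q, of 1 3 3 2] by (simp add: s power2_eq_square algebra_simps)
  show "dir_deriv (E 3) v q = dir_deriv (E 1) u q"
    using gauss[OF q, of 1 3 2 1] by (simp add: s power2_eq_square algebra_simps)
qed

section \<open>Harmonicity of u and v\<close>

text \<open>The Laplace-Beltrami operator in the orthonormal frame,
  \<open>\<Delta>\<phi> = \<Sum>\<^sub>k E\<^sub>k E\<^sub>k \<phi> - (\<nabla>\<^bsub>E\<^sub>k\<^esub>E\<^sub>k) \<phi>\<close>, since \<open>\<omega> j k j = - \<omega> j j k\<close>.\<close>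

definition frame_laplacian :: "(real^3 \<Rightarrow> real) \<Rightarrow> real^3 \<Rightarrow> real" where
  "frame_laplacian \<phi> q = (\<Sum>k\<in>Idx. dir_deriv (E k) (dir_deriv (E k) \<phi>) q)
                        + (\<Sum>k\<in>Idx. (\<Sum>j\<in>Idx. \<omega> j k j q) * dir_deriv (E k) \<phi> q)"

lemma frame_laplacian_add:
  assumes q: "q \<in> U" and sm: "smooth_on U \<phi>" "smooth_on U \<psi>"
  shows "frame_laplacian (\<lambda>r. \<phi> r + \<psi> r) q = frame_laplacian \<phi> q + frame_laplacian \<psi> q"
proof -
  have 1: "\<forall>r\<in>U. dir_deriv (E k) (\<lambda>r. \<phi> r + \<psi> r) r = dir_deriv (E k) \<phi> r + dir_deriv (E k) \<psi> r" for k
    using dir_deriv_add[OF U_open sm] by blast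
  have "dir_deriv (E k) (dir_deriv (E k) (\<lambda>r. \<phi> r + \<psi> r)) q
      = dir_deriv (E k) (dir_deriv (E k) \<phi>) q + dir_deriv (E k) (dir_deriv (E k) \<psi>) q" for k
    using dir_deriv_cong[OF U_open q 1]
      dir_deriv_add[OF U_open smooth_dir_deriv[OF sm(1)] smooth_dir_deriv[OF sm(2)] q] by simp
  then show ?thesis unfolding frame_laplacian_def using 1 q by (simp add: sum_Idx algebra_simps)
qed

lemma frame_laplacian_const: "frame_laplacian (\<lambda>r. c) q = 0"
  by (simp add: frame_laplacian_def dir_deriv_const[abs_def])

lemma frame_laplacian_mult:
  assumes q: "q \<in> U" and sm: "smooth_on U \<phi>" "smooth_on U \<psi>"
  shows "frame_laplacian (\<lambda>r. \<phi> r * \<psi> r) q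
       = \<phi> q * frame_laplacian \<psi> q + \<psi> q * frame_laplacian \<phi> q
         + 2 * (\<Sum>k\<in>Idx. dir_deriv (E k) \<phi> q * dir_deriv (E k) \<psi> q)"
proof -
  note D = smooth_dir_deriv and mult = dir_deriv_mult[OF U_open]
  have 1: "\<forall>r\<in>U. dir_deriv (E k) (\<lambda>r. \<phi> r * \<psi> r) r
      = dir_deriv (E k) \<phi> r * \<psi> r + \<phi> r * dir_deriv (E k) \<psi> r" for k
    using mult[OF sm] by blast
  have "dir_deriv (E k) (dir_deriv (E k) (\<lambda>r. \<phi> r * \<psi> r)) q
      = dir_deriv (E k) (dir_deriv (E k) \<phi>) q * \<psi> q + 2 * (dir_deriv (E k) \<phi> q * dir_deriv (E k) \<psi> q)
        + \<phi> q * dir_deriv (E k) (dir_deriv (E k) \<psi>) q" for k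
  proof -
    have "dir_deriv (E k) (dir_deriv (E k) (\<lambda>r. \<phi> r * \<psi> r)) q
        = dir_deriv (E k) (\<lambda>r. dir_deriv (E k) \<phi> r * \<psi> r) q
          + dir_deriv (E k) (\<lambda>r. \<phi> r * dir_deriv (E k) \<psi> r) q"
      using dir_deriv_cong[OF U_open q 1] dir_deriv_add[OF U_open smooth_on_mult[OF U_open D[OF sm(1)] sm(2)]
          smooth_on_mult[OF U_open sm(1) D[OF sm(2)]] q] by simp
    then show ?thesis
      unfolding mult[OF D[OF sm(1)] sm(2) q] mult[OF sm(1) D[OF sm(2)] q] by (simp add: algebra_simps)
  qed
  then show ?thesis unfolding frame_laplacian_def using 1 q by (simp add: sum_Idx algebra_simps)
qed

text \<open>Both \<open>u\<close> and \<open>v\<close> are harmonic: the second derivatives are traded via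
  \<open>E\<^sub>1 v = - E\<^sub>3 u\<close>, \<open>E\<^sub>3 v = E\<^sub>1 u\<close> and the formulas for \<open>E\<^sub>2 u\<close>, \<open>E\<^sub>2 v\<close>, and the
  commutator \<open>[E\<^sub>1, E\<^sub>3]\<close> cancels the first order terms.\<close>

lemma u_harmonic:
  assumes q: "q \<in> U"
  shows "frame_laplacian u q = 0"
proof -
  have "dir_deriv (E 3) (dir_deriv (E 3) u) q = dir_deriv (E 3) (\<lambda>r. - dir_deriv (E 1) v r) q"
    using gauss_u_v(3) by (intro dir_deriv_cong[OF U_open q]) simp
  then have E33: "dir_deriv (E 3) (dir_deriv (E 3) u) q = - dir_deriv (E 3) (dir_deriv (E 1) v) q"
    using dir_deriv_minus[OF U_open smooth_dir_deriv[OF smooth_v] q] by simp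
  have E11: "dir_deriv (E 1) (dir_deriv (E 1) u) q = dir_deriv (E 1) (dir_deriv (E 3) v) q"
    using gauss_u_v(4) by (intro dir_deriv_cong[OF U_open q]) simp
  have "dir_deriv (E 2) (dir_deriv (E 2) u) q = dir_deriv (E 2) (\<lambda>r. 2 * u r * v r) q"
    using gauss_u_v(2) by (intro dir_deriv_cong[OF U_open q]) simp
  then have E22: "dir_deriv (E 2) (dir_deriv (E 2) u) q = 2 * (dir_deriv (E 2) u q * v q + u q * dir_deriv (E 2) v q)"
    using dir_deriv_mult[OF U_open smooth_on_mult[OF U_open smooth_on_const smooth_u] smooth_v q]
      dir_deriv_mult[OF U_open smooth_on_const smooth_u q] by (simp add: dir_deriv_const algebra_simps)
  show ?thesis
    unfolding frame_laplacian_def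
    using E11 E22 E33 dir_deriv_commutator_frame[OF q smooth_v, of 1 3] gauss_u_v[OF q]
    by (simp add: sum_Idx \<omega>_table[OF q] algebra_simps)
qed

lemma v_harmonic:
  assumes q: "q \<in> U"
  shows "frame_laplacian v q = 0"
proof -
  have "dir_deriv (E 1) (dir_deriv (E 1) v) q = dir_deriv (E 1) (\<lambda>r. - dir_deriv (E 3) u r) q"
    using gauss_u_v(3) by (intro dir_deriv_cong[OF U_open q]) simp
  then have E11: "dir_deriv (E 1) (dir_deriv (E 1) v) q = - dir_deriv (E 1) (dir_deriv (E 3) u) q"
    using dir_deriv_minus[OF U_open smooth_dir_deriv[OF smooth_u] q] by simp
  have E33: "dir_deriv (E 3) (dir_deriv (E 3) v) q = dir_deriv (E 3) (dir_deriv (E 1) u) q"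
    using gauss_u_v(4) by (intro dir_deriv_cong[OF U_open q]) simp
  have "dir_deriv (E 2) (dir_deriv (E 2) v) q = dir_deriv (E 2) (\<lambda>r. (1 + v r * v r) - u r * u r) q"
    using gauss_u_v(1) by (intro dir_deriv_cong[OF U_open q]) (simp add: power2_eq_square)
  then have E22: "dir_deriv (E 2) (dir_deriv (E 2) v) q = 2 * v q * dir_deriv (E 2) v q - 2 * u q * dir_deriv (E 2) u q"
    using dir_deriv_diff[OF U_open smooth_on_add[OF U_open smooth_on_const smooth_on_mult[OF U_open smooth_v smooth_v]]
        smooth_on_mult[OF U_open smooth_u smooth_u] q]
      dir_deriv_add[OF U_open smooth_on_const smooth_on_mult[OF U_open smooth_v smooth_v] q]
      dir_deriv_mult[OF U_open smooth_v smooth_v q] dir_deriv_mult[OF U_open smooth_u smooth_u q]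
    by (simp add: dir_deriv_const)
  show ?thesis
    unfolding frame_laplacian_def
    using E11 E22 E33 dir_deriv_commutator_frame[OF q smooth_u, of 1 3] gauss_u_v(2-4)[OF q]
    by (simp add: sum_Idx \<omega>_table[OF q] algebra_simps)
qed

definition h :: "real^3 \<Rightarrow> real" where
  "h q = (u q - 1)\<^sup>2 + (v q)\<^sup>2"

lemma smooth_h: "smooth_on U h"
  unfolding h_def[abs_def] power2_eq_square
  by (intro smooth_on_add[OF U_open] smooth_on_mult[OF U_open] smooth_on_diff[OF U_open]
      smooth_u smooth_v smooth_on_const)

lemma frame_laplacian_h:
  assumes q: "q \<in> U"
  shows "frame_laplacian h q = 2 * (\<Sum>k\<in>Idx. (dir_deriv (E k) u q)\<^sup>2 + (dir_deriv (E k) v q)\<^sup>2)"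
proof -
  have sm1: "smooth_on U (\<lambda>r. u r - 1)" by (rule smooth_on_diff[OF U_open smooth_u smooth_on_const])
  have d1: "dir_deriv (E k) (\<lambda>r. u r - 1) q = dir_deriv (E k) u q" for k
    using dir_deriv_diff[OF U_open smooth_u smooth_on_const q] by (simp add: dir_deriv_const)
  have l1: "frame_laplacian (\<lambda>r. u r - 1) q = 0"
    using frame_laplacian_add[OF q smooth_u smooth_on_const, of "- 1"] u_harmonic[OF q]
    by (simp add: frame_laplacian_const)
  have "frame_laplacian h q = frame_laplacian (\<lambda>r. (u r - 1) * (u r - 1)) q + frame_laplacian (\<lambda>r. v r * v r) q"
    unfolding h_def power2_eq_square
    by (rule frame_laplacian_add[OF q smooth_on_mult[OF U_open sm1 sm1] smooth_on_mult[OF U_open smooth_v smooth_v]])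
  also have "\<dots> = 2 * (\<Sum>k\<in>Idx. (dir_deriv (E k) u q)\<^sup>2 + (dir_deriv (E k) v q)\<^sup>2)"
    unfolding frame_laplacian_mult[OF q sm1 sm1] frame_laplacian_mult[OF q smooth_v smooth_v] l1 v_harmonic[OF q] d1
    by (simp add: sum_Idx power2_eq_square algebra_simps)
  finally show ?thesis .
qed

section \<open>The Laplace-Beltrami operator in the frame\<close>

lemma dir_deriv_axis_expansion:
  "q \<in> U \<Longrightarrow> smooth_on U \<phi> \<Longrightarrow> dir_deriv (E k) \<phi> q = (\<Sum>a\<in>UNIV. E k q $ a *\<^sub>R pd \<phi> q (axis a 1))"
  unfolding dir_deriv_def by (rule pd_axis_expansion[OF U_open])

definition frame_matrix :: "real^3 \<Rightarrow> real^3^3" where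
  "frame_matrix q = vector [E 1 q, E 2 q, E 3 q]"

lemma frame_matrix_gram:
  "(transpose (frame_matrix q) ** frame_matrix q) $ a $ b = (\<Sum>k\<in>Idx. E k q $ a * E k q $ b)"
  by (simp add: frame_matrix_def matrix_matrix_mult_def transpose_def sum_3 add.assoc)

lemma Gmat_mult_frame_gram:
  assumes q: "q \<in> U"
  shows "Gmat f q ** (transpose (frame_matrix q) ** frame_matrix q) = mat 1"
proof -
  define P where "P = transpose (frame_matrix q) ** frame_matrix q"
  have "(Gmat f q ** P) $ a $ b = mat 1 $ a $ b" for a b
  proof -
    have "(Gmat f q ** P) $ a $ b
        = (\<Sum>c\<in>UNIV. inner (pd f q (axis a 1)) (pd f q (axis c 1)) * (\<Sum>k\<in>Idx. E k q $ c * E k q $ b))"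
      unfolding matrix_matrix_mult_def[of "Gmat f q"] P_def frame_matrix_gram by (simp add: Gmat_def gm_def)
    also have "\<dots> = (\<Sum>k\<in>Idx. (\<Sum>c\<in>UNIV. E k q $ c * inner (pd f q (axis a 1)) (pd f q (axis c 1))) * E k q $ b)"
      by (simp add: sum_distrib_left sum_distrib_right distrib_left sum.distrib mult_ac)
    also have "\<dots> = (\<Sum>k\<in>Idx. inner (pd f q (axis a 1)) (F k q) *\<^sub>R E k q) $ b"
      by (simp add: F_def dir_deriv_axis_expansion[OF q f_smooth] inner_sum_right)
    also have "\<dots> = mat 1 $ a $ b" using tangent_expansion[OF q, of "axis a 1"] by (simp add: axis_def mat_def)
    finally show ?thesis .
  qed
  then show ?thesis by (simp add: vec_eq_iff P_def)
qed

lemma matrix_inv_Gmat: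
  assumes q: "q \<in> U"
  shows "matrix_inv (Gmat f q) $ a $ b = (\<Sum>k\<in>Idx. E k q $ a * E k q $ b)"
proof -
  let ?P = "transpose (frame_matrix q) ** frame_matrix q"
  have "?P ** Gmat f q = mat 1"
    using Gmat_mult_frame_gram[OF q] matrix_left_right_inverse by blast
  then have "matrix_inv (Gmat f q) = ?P"
    using Gmat_mult_frame_gram[OF q] by (intro matrix_inv_eqI)
  then show ?thesis by (simp add: frame_matrix_gram)
qed

definition vol :: "real^3 \<Rightarrow> real" where
  "vol q = inner (E 1 q) (cross3 (E 2 q) (E 3 q))"

lemma sqrt_det_Gmat:
  assumes q: "q \<in> U"
  shows "vol q \<noteq> 0" "sqrt (det (Gmat f q)) = 1 / \<bar>vol q\<bar>"
proof -
  have "det (Gmat f q) * (vol q * vol q) = 1"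
    using arg_cong[OF Gmat_mult_frame_gram[OF q], of det]
    by (simp add: det_mul vol_def dot_cross_det frame_matrix_def)
  then show "vol q \<noteq> 0" by auto
  with \<open>det (Gmat f q) * (vol q * vol q) = 1\<close> have "det (Gmat f q) = 1 / (vol q)\<^sup>2"
    by (simp add: field_simps power2_eq_square)
  then show "sqrt (det (Gmat f q)) = 1 / \<bar>vol q\<bar>" by (simp add: real_sqrt_divide)
qed

definition coframe :: "nat \<Rightarrow> real^3 \<Rightarrow> real^3 \<Rightarrow> real" where
  "coframe b q w = inner (pd f q w) (F b q)"

lemma linear_coframe: "q \<in> U \<Longrightarrow> linear (coframe b q)"
  unfolding coframe_def[abs_def]
  by (intro linear_compose[OF linear_pd[OF U_open f_smooth], unfolded o_def] bounded_linear.linear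
      bounded_linear_inner_left)

lemma coframe_E: "q \<in> U \<Longrightarrow> b \<in> Idx \<Longrightarrow> m \<in> Idx \<Longrightarrow> coframe b q (E m q) = kronecker m b"
  using F_orthonormal[of q m b] by (simp add: coframe_def F_def dir_deriv_def)

lemma coframe_expansion: "q \<in> U \<Longrightarrow> w = (\<Sum>k\<in>Idx. coframe k q w *\<^sub>R E k q)"
  unfolding coframe_def by (rule tangent_expansion)

text \<open>Cramer's rule: in the triple product a frame vector may be replaced by any \<open>w\<close> at the cost of
  the corresponding coordinate of \<open>w\<close>.\<close>

lemma triple_product_coframe:
  assumes q: "q \<in> U"
  shows "inner w (cross3 (E 2 q) (E 3 q)) = coframe 1 q w * vol q"
    "inner (E 1 q) (cross3 w (E 3 q)) = coframe 2 q w * vol q"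
    "inner (E 1 q) (cross3 (E 2 q) w) = coframe 3 q w * vol q"
proof -
  have w: "w = coframe 1 q w *\<^sub>R E 1 q + coframe 2 q w *\<^sub>R E 2 q + coframe 3 q w *\<^sub>R E 3 q"
    using coframe_expansion[OF q, of w] by (simp add: sum_Idx)
  note simps = vol_def inner_add_left inner_add_right cross_add_left cross_add_right
    cross_mult_left cross_mult_right dot_cross_self
  show "inner w (cross3 (E 2 q) (E 3 q)) = coframe 1 q w * vol q"
    using arg_cong[OF w, of "\<lambda>z. inner z (cross3 (E 2 q) (E 3 q))"] by (simp add: simps)
  show "inner (E 1 q) (cross3 w (E 3 q)) = coframe 2 q w * vol q"
    using arg_cong[OF w, of "\<lambda>z. inner (E 1 q) (cross3 z (E 3 q))"] by (simp add: simps)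
  show "inner (E 1 q) (cross3 (E 2 q) w) = coframe 3 q w * vol q"
    using arg_cong[OF w, of "\<lambda>z. inner (E 1 q) (cross3 (E 2 q) z)"] by (simp add: simps)
qed

lemma smooth_vol: "smooth_on U vol"
  unfolding vol_def[abs_def]
  by (intro smooth_on_inner[OF U_open smooth_E] smooth_on_bilinear[OF bounded_bilinear_cross3 U_open] smooth_E)

lemma pd_vol:
  assumes q: "q \<in> U"
  shows "pd vol q w = (\<Sum>b\<in>Idx. coframe b q (pd (E b) q w)) * vol q"
proof -
  note d = has_derivative_pd_smooth[OF U_open smooth_E q]
  have "(vol has_derivative (\<lambda>w. inner (E 1 q) (cross3 (E 2 q) (pd (E 3) q w) + cross3 (pd (E 2) q w) (E 3 q))
      + inner (pd (E 1) q w) (cross3 (E 2 q) (E 3 q)))) (at q)"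
    unfolding vol_def[abs_def]
    by (intro bounded_bilinear.FDERIV[OF bounded_bilinear_inner] d
        bounded_bilinear.FDERIV[OF bounded_bilinear_cross3])
  then show ?thesis
    by (simp add: pd_eqI inner_add_right triple_product_coframe[OF q] sum_Idx algebra_simps)
qed

lemma trace_jacobian_frame:
  assumes q: "q \<in> U" and X: "smooth_on U X"
  shows "trace (jacobian X (at q)) = (\<Sum>b\<in>Idx. coframe b q (pd X q (E b q)))"
proof -
  have "trace (jacobian X (at q)) = (\<Sum>a\<in>UNIV. (\<Sum>b\<in>Idx. coframe b q (pd X q (axis a 1)) *\<^sub>R E b q) $ a)"
    unfolding trace_jacobian using coframe_expansion[OF q] by simp
  also have "\<dots> = (\<Sum>b\<in>Idx. \<Sum>a\<in>UNIV. E b q $ a * coframe b q (pd X q (axis a 1)))"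
    by (simp add: sum.swap[of _ UNIV] mult.commute)
  also have "\<dots> = (\<Sum>b\<in>Idx. coframe b q (pd X q (E b q)))"
  proof -
    have L: "coframe b q (pd X q v) = (\<Sum>a\<in>UNIV. v $ a * coframe b q (pd X q (axis a 1)))" for b v
      using linear_axis_expansion[OF linear_compose[OF linear_pd[OF U_open X q] linear_coframe[OF q]], where x = v]
      by (simp only: o_def real_scaleR_def)
    show ?thesis by (simp only: L[symmetric])
  qed
  finally show ?thesis .
qed

lemma coframe_bracket:
  assumes q: "q \<in> U"
  shows "(\<Sum>b\<in>Idx. coframe b q (pd (E k) q (E b q))) - (\<Sum>b\<in>Idx. coframe b q (pd (E b) q (E k q)))
       = (\<Sum>j\<in>Idx. \<omega> j k j q)"
proof -
  have "coframe b q (pd (E k) q (E b q) - pd (E b) q (E k q)) = \<omega> b k b q" if "b \<in> Idx" for b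
  proof -
    have "coframe b q (pd (E k) q (E b q) - pd (E b) q (E k q))
        = (\<Sum>m\<in>Idx. (\<omega> b k m q - \<omega> k b m q) * kronecker m b)"
      unfolding bracket_expansion[OF q] using that
      by (simp add: linear_add[OF linear_coframe[OF q]] linear_scale[OF linear_coframe[OF q]] coframe_E[OF q])
    then show ?thesis using that \<omega>_diag[OF q that] by (auto simp: kronecker_def)
  qed
  then have "coframe b q (pd (E k) q (E b q)) - coframe b q (pd (E b) q (E k q)) = \<omega> b k b q"
    if "b \<in> Idx" for b
    using that by (simp add: linear_diff[OF linear_coframe[OF q]])
  from this[of 1] this[of 2] this[of 3] show ?thesis by (simp add: sum_Idx)
qed

text \<open>For \<open>Y = \<Sum>\<^sub>k c\<^sub>k E\<^sub>k\<close> the density term \<open>vol'(Y) / vol\<close> of the divergence collects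
  \<open>\<Sum>\<^sub>b coframe b (E\<^sub>b' Y)\<close>, which together with the trace of \<open>Y'\<close> leaves only brackets
  \<open>[E\<^sub>b, E\<^sub>k]\<close>, i.e. connection coefficients.\<close>

lemma frame_divergence:
  assumes q: "q \<in> U" and c: "\<And>k. smooth_on U (c k)"
  shows "trace (jacobian (\<lambda>r. \<Sum>k\<in>Idx. c k r *\<^sub>R E k r) (at q))
           - pd vol q (\<Sum>k\<in>Idx. c k q *\<^sub>R E k q) / vol q
       = (\<Sum>k\<in>Idx. dir_deriv (E k) (c k) q + c k q * (\<Sum>j\<in>Idx. \<omega> j k j q))"
proof -
  let ?Y = "\<lambda>r. \<Sum>k\<in>Idx. c k r *\<^sub>R E k r"
  note \<theta> = linear_add[OF linear_coframe[OF q]] linear_scale[OF linear_coframe[OF q]]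
    linear_sum[OF linear_coframe[OF q]] coframe_E[OF q]
  have smY: "smooth_on U ?Y"
    using smooth_on_scaleR[OF U_open c smooth_E] by (intro smooth_on_sum[OF U_open]) auto
  have "(?Y has_derivative (\<lambda>w. \<Sum>k\<in>Idx. c k q *\<^sub>R pd (E k) q w + pd (c k) q w *\<^sub>R E k q)) (at q)"
    using c by (intro has_derivative_sum has_derivative_scaleR has_derivative_pd_smooth[OF U_open _ q] smooth_E)
  then have "trace (jacobian ?Y (at q))
      = (\<Sum>b\<in>Idx. \<Sum>k\<in>Idx. c k q * coframe b q (pd (E k) q (E b q)) + pd (c k) q (E b q) * kronecker k b)"
    using trace_jacobian_frame[OF q smY] by (simp add: pd_eqI \<theta>)
  also have "\<dots> = (\<Sum>k\<in>Idx. c k q * (\<Sum>b\<in>Idx. coframe b q (pd (E k) q (E b q))) + dir_deriv (E k) (c k) q)"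
    by (simp add: sum_Idx kronecker_def dir_deriv_def algebra_simps)
  finally have "trace (jacobian ?Y (at q)) = \<dots>" .
  moreover have "pd vol q (?Y q) / vol q = (\<Sum>k\<in>Idx. c k q * (\<Sum>b\<in>Idx. coframe b q (pd (E b) q (E k q))))"
    using sqrt_det_Gmat(1)[OF q]
    by (simp add: pd_vol[OF q] linear_add[OF linear_pd[OF U_open smooth_E q]]
        linear_scale[OF linear_pd[OF U_open smooth_E q]] \<theta> sum_Idx field_simps)
  ultimately have "trace (jacobian ?Y (at q)) - pd vol q (?Y q) / vol q
      = (\<Sum>k\<in>Idx. dir_deriv (E k) (c k) q + c k q * ((\<Sum>b\<in>Idx. coframe b q (pd (E k) q (E b q)))
                                                   - (\<Sum>b\<in>Idx. coframe b q (pd (E b) q (E k q)))))"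
    by (simp add: sum_Idx algebra_simps)
  also have "\<dots> = (\<Sum>k\<in>Idx. dir_deriv (E k) (c k) q + c k q * (\<Sum>j\<in>Idx. \<omega> j k j q))"
    by (rule sum.cong[OF refl]) (simp only: coframe_bracket[OF q])
  finally show ?thesis .
qed

lemma LC_inner_eq_u: "q \<in> U \<Longrightarrow> LC_inner f e3 e1 e2 q = u q"
  using LC_inner_induced[OF U_open f_smooth e_smooth(1)]
  by (simp add: u_def \<omega>_def F_def E_def dir_deriv_def[abs_def])

lemma pd_ln_lam_eq_v: "q \<in> U \<Longrightarrow> pd (\<lambda>q. ln (lam q)) q (e2 q) = v q"
  using pd_eqI[OF has_derivative_ln[OF _ has_derivative_pd_smooth[OF U_open lam_smooth]]] lam_pos
  by (simp add: v_def dir_deriv_def E_def divide_inverse)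

lemma grad_sq_frame:
  assumes q: "q \<in> U" and sm: "smooth_on U \<phi>"
  shows "grad_sq f \<phi> q = (\<Sum>k\<in>Idx. (dir_deriv (E k) \<phi> q)\<^sup>2)"
proof -
  have "grad_sq f \<phi> q = (\<Sum>a\<in>UNIV. \<Sum>b\<in>UNIV. (\<Sum>k\<in>Idx. E k q $ a * E k q $ b) * pd \<phi> q (axis a 1) * pd \<phi> q (axis b 1))"
    by (simp add: grad_sq_def matrix_inv_Gmat[OF q])
  also have "\<dots> = (\<Sum>k\<in>Idx. (\<Sum>a\<in>UNIV. E k q $ a * pd \<phi> q (axis a 1)) * (\<Sum>b\<in>UNIV. E k q $ b * pd \<phi> q (axis b 1)))"
    by (simp add: sum_distrib_left sum_distrib_right distrib_left sum.distrib mult_ac)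
  also have "\<dots> = (\<Sum>k\<in>Idx. (dir_deriv (E k) \<phi> q)\<^sup>2)"
    by (simp add: dir_deriv_axis_expansion[OF q sm] power2_eq_square)
  finally show ?thesis .
qed

text \<open>In coordinates, \<open>\<Delta>\<phi>\<close> is the weighted divergence of the gradient \<open>\<Sum>\<^sub>k E\<^sub>k(\<phi>) E\<^sub>k\<close>
  with density \<open>\<surd>det g = 1 / |vol|\<close>.\<close>

lemma laplacian_eq_frame_laplacian:
  assumes q: "q \<in> U" and sm: "smooth_on U \<phi>"
  shows "laplacian f \<phi> q = frame_laplacian \<phi> q"
proof -
  let ?Y = "\<lambda>r. \<Sum>k\<in>Idx. dir_deriv (E k) \<phi> r *\<^sub>R E k r"
  have smY: "smooth_on U ?Y"
    using smooth_on_scaleR[OF U_open smooth_dir_deriv[OF sm] smooth_E] by (intro smooth_on_sum[OF U_open]) auto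
  have density: "sqrt (det (Gmat f r)) * (\<Sum>j\<in>UNIV. matrix_inv (Gmat f r) $ a $ j * pd \<phi> r (axis j 1))
      = ?Y r $ a / \<bar>vol r\<bar>" if r: "r \<in> U" for a r
  proof -
    have "(\<Sum>j\<in>UNIV. matrix_inv (Gmat f r) $ a $ j * pd \<phi> r (axis j 1))
        = (\<Sum>k\<in>Idx. E k r $ a * (\<Sum>j\<in>UNIV. E k r $ j * pd \<phi> r (axis j 1)))"
      by (simp add: matrix_inv_Gmat[OF r] sum_distrib_left sum_distrib_right distrib_left sum.distrib mult_ac)
    then show ?thesis
      by (simp add: sqrt_det_Gmat(2)[OF r] dir_deriv_axis_expansion[OF r sm] mult.commute)
  qed
  have "pd (\<lambda>r. sqrt (det (Gmat f r)) * (\<Sum>j\<in>UNIV. matrix_inv (Gmat f r) $ a $ j * pd \<phi> r (axis j 1))) q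
      = pd (\<lambda>r. ?Y r $ a / \<bar>vol r\<bar>) q" for a
    by (rule pd_cong_on_open[OF U_open q]) (simp add: density)
  then have "laplacian f \<phi> q = \<bar>vol q\<bar> * (\<Sum>a\<in>UNIV. pd (\<lambda>r. ?Y r $ a / \<bar>vol r\<bar>) q (axis a 1))"
    unfolding laplacian_def sqrt_det_Gmat(2)[OF q] by simp
  also have "\<dots> = trace (jacobian ?Y (at q)) - pd vol q (?Y q) / vol q"
    by (rule weighted_divergence[OF U_open smooth_vol smY q sqrt_det_Gmat(1)[OF q]])
  also have "\<dots> = frame_laplacian \<phi> q"
    using frame_divergence[where c = "\<lambda>k. dir_deriv (E k) \<phi>", OF q smooth_dir_deriv[OF sm]]
    by (simp add: frame_laplacian_def sum.distrib algebra_simps)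
  finally show ?thesis .
qed

lemma laplacian_h: "p \<in> U \<Longrightarrow> laplacian f h p / 2 = grad_sq f u p + grad_sq f v p"
  by (simp add: laplacian_eq_frame_laplacian smooth_h frame_laplacian_h grad_sq_frame smooth_u smooth_v
      sum.distrib)

text \<open>Only the \<open>E\<^sub>2\<close>-derivatives are kept; by the Gauss equations they give
  \<open>(2uv)\<^sup>2 + (1 + v\<^sup>2 - u\<^sup>2)\<^sup>2 = h\<^sup>2 + 4uh\<close>.\<close>

lemma grad_sq_u_v_lower_bound:
  assumes p: "p \<in> U"
  shows "grad_sq f u p + grad_sq f v p \<ge> (h p)\<^sup>2 + 4 * u p * h p"
proof -
  have "(h p)\<^sup>2 + 4 * u p * h p = (dir_deriv (E 2) u p)\<^sup>2 + (dir_deriv (E 2) v p)\<^sup>2"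
    by (simp add: gauss_u_v[OF p] h_def power2_eq_square algebra_simps)
  also have "\<dots> \<le> grad_sq f u p + grad_sq f v p"
    by (simp add: grad_sq_frame[OF p smooth_u] grad_sq_frame[OF p smooth_v] sum_Idx)
  finally show ?thesis .
qed

end

theorem mainTheorem6:
  fixes U :: "(real^3) set" and f :: "real^3 \<Rightarrow> real^5" and N :: "real^3 \<Rightarrow> real^5"
    and lam :: "real^3 \<Rightarrow> real" and e1 e2 e3 :: "real^3 \<Rightarrow> real^3"
  assumes U_open: "open U"
    and f_smooth: "smooth_on U f"
    and f_sphere: "\<forall>p\<in>U. norm (f p) = 1"
    and f_immersion: "\<forall>p\<in>U. inj (pd f p)"
    and N_smooth: "smooth_on U N"
    and N_unit: "\<forall>p\<in>U. norm (N p) = 1"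
    and N_normal: "\<forall>p\<in>U. inner (N p) (f p) = 0 \<and> (\<forall>w. inner (N p) (pd f p w) = 0)"
    and lam_smooth: "smooth_on U lam"
    and lam_pos: "\<forall>p\<in>U. lam p > 0"
    and e_smooth: "smooth_on U e1" "smooth_on U e2" "smooth_on U e3"
    and e_orthonormal: "\<forall>p\<in>U.
        gm f p (e1 p) (e1 p) = 1 \<and> gm f p (e2 p) (e2 p) = 1 \<and> gm f p (e3 p) (e3 p) = 1 \<and>
        gm f p (e1 p) (e2 p) = 0 \<and> gm f p (e1 p) (e3 p) = 0 \<and> gm f p (e2 p) (e3 p) = 0"
    and e_principal: "\<forall>p\<in>U.
        pd N p (e1 p) = - (lam p *\<^sub>R pd f p (e1 p)) \<and>
        pd N p (e2 p) = 0 \<and>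
        pd N p (e3 p) = lam p *\<^sub>R pd f p (e3 p)"
  defines "u \<equiv> LC_inner f e3 e1 e2"
    and "v \<equiv> (\<lambda>p. pd (\<lambda>q. ln (lam q)) p (e2 p))"
    and "h \<equiv> (\<lambda>p. (LC_inner f e3 e1 e2 p - 1)\<^sup>2 + (pd (\<lambda>q. ln (lam q)) p (e2 p))\<^sup>2)"
  shows "\<forall>p\<in>U.
      laplacian f h p / 2 = grad_sq f u p + grad_sq f v p \<and>
      grad_sq f u p + grad_sq f v p \<ge> (h p)\<^sup>2 + 4 * u p * h p \<and>
      (u p > 0 \<longrightarrow> laplacian f h p \<ge> 2 * (h p)\<^sup>2)"
proof
  fix p
  assume p: "p \<in> U"
  interpret M: principal_frame U f N lam e1 e2 e3
    using U_open f_smooth f_sphere f_immersion N_smooth N_unit N_normal lam_smooth lam_pos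
      e_smooth e_orthonormal e_principal by unfold_locales
  have "\<forall>r\<in>U. u r = M.u r" "\<forall>r\<in>U. v r = M.v r" "\<forall>r\<in>U. h r = M.h r"
    by (simp_all add: u_def v_def h_def M.h_def M.LC_inner_eq_u M.pd_ln_lam_eq_v)
  note cong = laplacian_cong[OF U_open p this(3)] grad_sq_cong[OF U_open p this(1)]
    grad_sq_cong[OF U_open p this(2)] this[rule_format, OF p]
  have laplacian: "laplacian f h p / 2 = grad_sq f u p + grad_sq f v p"
    using M.laplacian_h[OF p] by (simp add: cong)
  moreover have bound: "grad_sq f u p + grad_sq f v p \<ge> (h p)\<^sup>2 + 4 * u p * h p"
    using M.grad_sq_u_v_lower_bound[OF p] by (simp add: cong)
  moreover have "laplacian f h p \<ge> 2 * (h p)\<^sup>2" if "u p > 0"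
  proof -
    have "0 \<le> 4 * u p * h p" using that by (simp add: h_def)
    then show ?thesis using laplacian bound by linarith
  qed
  ultimately show "laplacian f h p / 2 = grad_sq f u p + grad_sq f v p \<and>
      grad_sq f u p + grad_sq f v p \<ge> (h p)\<^sup>2 + 4 * u p * h p \<and>
      (u p > 0 \<longrightarrow> laplacian f h p \<ge> 2 * (h p)\<^sup>2)" by blast
qed

end
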